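(* Let $p>0$ be an integer and let $E_p$ be the Eschenburg space $E_{\bar a,\bar b}$ with $\bar a=(1,1,p)$, $\bar b=(0,0,p+2)$. Let $\mathrm{G}=\mathrm{SU}(2)\times\mathrm{SU}(2)$ act on $E_p$ by $(g_1,g_2)\cdot[A]=[\iota(g_1)\,A\,\iota(g_2)^{-1}]$, where $\iota:\mathrm{SU}(2)\to\mathrm{SU}(3)$ is the upper-left $2\times2$ block embedding. This action has cohomogeneity one, with principal isotropy group $\mathrm{H}=\{((\pm\mathrm{id})^{p+1},(\pm\mathrm{id})^{p})\}\cong\mathbb{Z}_2$ (same sign in both entries) and singular isotropy groups $\mathrm{K}^-=\Delta\mathrm{SU}(2)\cdot\mathrm{H}$ and $\mathrm{K}^+=\{(\mathrm{diag}(z^{p+1},\bar z^{p+1}),\mathrm{diag}(z^{p},\bar z^{p})):|z|=1\}$, a circle of slope $(p+1,p)$ in a maximal torus of $\mathrm{SU}(2)\times\mathrm{SU}(2)$.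
   Context: $E_{\bar a,\bar b}$ is the quotient of $\mathrm{SU}(3)$ by the free circle action $z\cdot A=\mathrm{diag}(z^{a_1},z^{a_2},z^{a_3})A\,\mathrm{diag}(z^{b_1},z^{b_2},z^{b_3})^{-1}$, equipped with the Eschenburg metric (submersion metric from the left-invariant, $\mathrm{Ad}(\mathrm{U}(2))$-invariant metric on $\mathrm{SU}(3)$ obtained by scaling the bi-invariant metric by a fixed $t\in(0,1)$ on the Lie algebra of the upper-left block $\mathrm{U}(2)$). For a cohomogeneity one action with orbit space an interval, the group diagram $\mathrm{H}\subset\{\mathrm{K}^-,\mathrm{K}^+\}\subset\mathrm{G}$ consists of the isotropy groups along a minimal geodesic between the two non-principal orbits: $\mathrm{K}^\pm$ at the endpoints and $\mathrm{H}$ at interior points. $\Delta\mathrm{SU}(2)$ is the diagonal subgroup. *)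

theory Defs
  imports "HOL-Analysis.Analysis"
begin

definition adj :: "complex^'n^'n \<Rightarrow> complex^'n^'n" where
  "adj U = (\<chi> i j. cnj (U $ j $ i))"

definition SU :: "(complex^'n^'n) set" where
  "SU = {U. U ** adj U = mat 1 \<and> det U = 1}"

definition S1 :: "complex set" where
  "S1 = {z. cmod z = 1}"

definition diag3 :: "complex \<Rightarrow> complex \<Rightarrow> complex \<Rightarrow> complex^3^3" where
  "diag3 a b c = (\<chi> i j. if i = j then (if i = 1 then a else if i = 2 then b else c) else 0)"

definition diag2 :: "complex \<Rightarrow> complex \<Rightarrow> complex^2^2" where
  "diag2 a b = (\<chi> i j. if i = j then (if i = 1 then a else b) else 0)"

definition emb :: "complex^2^2 \<Rightarrow> complex^3^3" where
  "emb g = (\<chi> i j. if i = 3 \<or> j = 3 then (if i = j then 1 else 0)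
                   else g $ (if i = 1 then (1::2) else 2) $ (if j = 1 then (1::2) else 2))"

definition circ_act :: "int \<times> int \<times> int \<Rightarrow> int \<times> int \<times> int \<Rightarrow> complex \<Rightarrow> complex^3^3 \<Rightarrow> complex^3^3" where
  "circ_act a b z A =
     diag3 (z powi fst a) (z powi fst (snd a)) (z powi snd (snd a)) ** A **
     diag3 (z powi (- fst b)) (z powi (- fst (snd b))) (z powi (- snd (snd b)))"

text \<open>Squared norm of X in su(3) for the Eschenburg metric: the bi-invariant metric
  -Re tr(XY) (so |X|^2 = sum |X_ij|^2), scaled by t on the Lie algebra u(2) of the
  upper-left block U(2) (entries with i,j both in the block or i=j=3), unchanged on
  its orthogonal complement (entries (i,3),(3,i), i=1,2).\<close>
definition esch_sqnorm :: "real \<Rightarrow> complex^3^3 \<Rightarrow> real" where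
  "esch_sqnorm t X = (\<Sum>i\<in>UNIV. \<Sum>j\<in>UNIV. (if (i = 3) \<noteq> (j = 3) then 1 else t) * (cmod (X $ i $ j))\<^sup>2)"

text \<open>Length of a curve for the left-invariant metric: |gamma'| = |gamma^(-1) gamma'|_e.\<close>
definition curve_length :: "real \<Rightarrow> (real \<Rightarrow> complex^3^3) \<Rightarrow> real" where
  "curve_length t \<gamma> = integral {0..1}
     (\<lambda>s. sqrt (esch_sqnorm t (adj (\<gamma> s) ** vector_derivative \<gamma> (at s within {0..1}))))"

definition su3_dist :: "real \<Rightarrow> complex^3^3 \<Rightarrow> complex^3^3 \<Rightarrow> real" where
  "su3_dist t A B = Inf {curve_length t \<gamma> | \<gamma>. \<gamma> C1_differentiable_on {0..1} \<and>
      (\<forall>s\<in>{0..1}. \<gamma> s \<in> SU) \<and> \<gamma> 0 = A \<and> \<gamma> 1 = B}"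

text \<open>Distance in E_{a,b} between the classes [A], [B] for the submersion metric
  (the circle acts isometrically, so this is the infimum over the fibre).\<close>
definition esch_dist :: "int \<times> int \<times> int \<Rightarrow> int \<times> int \<times> int \<Rightarrow> real \<Rightarrow> complex^3^3 \<Rightarrow> complex^3^3 \<Rightarrow> real" where
  "esch_dist a b t A B = Inf {su3_dist t A (circ_act a b z B) | z. z \<in> S1}"

definition Gact :: "(complex^2^2) \<times> (complex^2^2) \<Rightarrow> complex^3^3 \<Rightarrow> complex^3^3" where
  "Gact g A = emb (fst g) ** A ** emb (adj (snd g))"

definition same_Gorbit :: "int \<times> int \<times> int \<Rightarrow> int \<times> int \<times> int \<Rightarrow> complex^3^3 \<Rightarrow> complex^3^3 \<Rightarrow> bool" where
  "same_Gorbit a b A B \<longleftrightarrow> (\<exists>g\<in>SU \<times> SU. \<exists>z\<in>S1. B = circ_act a b z (Gact g A))"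

definition isotropy :: "int \<times> int \<times> int \<Rightarrow> int \<times> int \<times> int \<Rightarrow> complex^3^3 \<Rightarrow> ((complex^2^2) \<times> (complex^2^2)) set" where
  "isotropy a b A = {g \<in> SU \<times> SU. \<exists>z\<in>S1. Gact g A = circ_act a b z A}"

definition a_p :: "nat \<Rightarrow> int \<times> int \<times> int" where "a_p p = (1, 1, int p)"
definition b_p :: "nat \<Rightarrow> int \<times> int \<times> int" where "b_p p = (0, 0, int p + 2)"

definition H_p :: "nat \<Rightarrow> ((complex^2^2) \<times> (complex^2^2)) set" where
  "H_p p = {(mat (e ^ (p + 1)), mat (e ^ p)) | e. e = 1 \<or> e = -1}"

definition Kminus_p :: "nat \<Rightarrow> ((complex^2^2) \<times> (complex^2^2)) set" where
  "Kminus_p p = {(g ** fst h, g ** snd h) | g h. g \<in> SU \<and> h \<in> H_p p}"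

definition Kplus_p :: "nat \<Rightarrow> ((complex^2^2) \<times> (complex^2^2)) set" where
  "Kplus_p p = {(diag2 (z ^ (p + 1)) (cnj z ^ (p + 1)), diag2 (z ^ p) (cnj z ^ p)) | z. z \<in> S1}"

end

theory Submission
  imports Defs
begin

text \<open>The rotation \<open>rot \<theta>\<close> in the plane of the last two coordinates meets every orbit:
  the circle action makes the corner entry \<open>A\<^sub>3\<^sub>3\<close> real and nonnegative, and
  SU(2) \<times> SU(2) then moves the last row and column of \<open>A\<close> to those of \<open>rot \<theta>\<close>, which
  determine a matrix of SU(3) as long as \<open>\<bar>A\<^sub>3\<^sub>3\<bar> < 1\<close>. The function
  \<open>sqrt 2 * arccos \<bar>A\<^sub>3\<^sub>3\<bar>\<close> is invariant under both actions and changes along any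
  curve in SU(3) by at most its Eschenburg length, while along the unit speed curve
  \<open>rot (s / sqrt 2)\<close> it equals \<open>s\<close>. Hence this curve realises the distance between the
  orbits of any two of its points, and it is a minimal geodesic between the singular orbits
  through \<open>mat 1\<close> and \<open>rot (pi / 2)\<close>.\<close>

section \<open>Unitary matrices of size two and three\<close>

lemma adj_nth [simp]: "adj U $ i $ j = cnj (U $ j $ i)"
  by (simp add: adj_def)

lemma adj_adj [simp]: "adj (adj U) = U"
  by (simp add: vec_eq_iff)

lemma adj_mat [simp]: "adj (mat c :: complex^'n^'n) = mat (cnj c)"
  by (simp add: vec_eq_iff mat_def)

lemma adj_matrix_mul: "adj ((A::complex^'n^'n) ** B) = adj B ** adj A"
  by (simp add: vec_eq_iff matrix_matrix_mult_def mult.commute)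

lemma SU_I: "U ** adj U = mat 1 \<Longrightarrow> det U = 1 \<Longrightarrow> U \<in> SU"
  by (simp add: SU_def)

lemma SU_unitary: "U \<in> SU \<Longrightarrow> U ** adj U = mat 1"
  and SU_det: "U \<in> SU \<Longrightarrow> det U = 1"
  by (simp_all add: SU_def)

lemma SU_unitary': "U \<in> SU \<Longrightarrow> adj U ** U = mat 1"
  using matrix_left_right_inverse SU_unitary by blast

lemma SU_mat_1 [simp]: "mat 1 \<in> SU"
  by (simp add: SU_def)

lemma SU_matrix_mul: assumes "A \<in> SU" "B \<in> SU" shows "A ** B \<in> SU"
proof (rule SU_I)
  have "A ** B ** adj (A ** B) = A ** (B ** adj B) ** adj A"
    by (simp only: adj_matrix_mul matrix_mul_assoc)
  then show "A ** B ** adj (A ** B) = mat 1"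
    using assms by (simp add: SU_unitary)
  show "det (A ** B) = 1"
    using assms by (simp add: det_mul SU_det)
qed

lemma SU_adj: assumes "U \<in> SU" shows "adj U \<in> SU"
proof (rule SU_I)
  show "adj U ** adj (adj U) = mat 1"
    using SU_unitary'[OF assms] by simp
  have "det (adj U) * det U = 1"
    using SU_unitary'[OF assms] by (metis det_I det_mul)
  then show "det (adj U) = 1"
    using SU_det[OF assms] by simp
qed

lemma matrix_mul_nth_2:
  "((A::'a::semiring_1^2^2) ** B) $ i $ j = A$i$1 * B$1$j + A$i$2 * B$2$j"
  by (simp add: matrix_matrix_mult_def sum_2)

lemma matrix_mul_nth_3:
  "((A::'a::semiring_1^3^3) ** B) $ i $ j = A$i$1 * B$1$j + A$i$2 * B$2$j + A$i$3 * B$3$j"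
  by (simp add: matrix_matrix_mult_def sum_3)

lemma mat2_eq_iff: "(A::'a^2^2) = B \<longleftrightarrow>
  A$1$1 = B$1$1 \<and> A$1$2 = B$1$2 \<and> A$2$1 = B$2$1 \<and> A$2$2 = B$2$2"
  by (auto simp add: vec_eq_iff forall_2)

lemma mat3_eq_iff: "(A::'a^3^3) = B \<longleftrightarrow>
  A$1$1 = B$1$1 \<and> A$1$2 = B$1$2 \<and> A$1$3 = B$1$3 \<and>
  A$2$1 = B$2$1 \<and> A$2$2 = B$2$2 \<and> A$2$3 = B$2$3 \<and>
  A$3$1 = B$3$1 \<and> A$3$2 = B$3$2 \<and> A$3$3 = B$3$3"
  unfolding vec_eq_iff forall_3 by (simp only: conj_assoc)

lemma mat_nth_2 [simp]:
  "(mat c :: 'a::zero^2^2) $ 1 $ 1 = c" "(mat c :: 'a^2^2) $ 1 $ 2 = 0"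
  "(mat c :: 'a^2^2) $ 2 $ 1 = 0" "(mat c :: 'a^2^2) $ 2 $ 2 = c"
  by (simp_all add: mat_def)

lemma mat_nth_3 [simp]:
  "(mat c :: 'a::zero^3^3) $ 1 $ 1 = c" "(mat c :: 'a^3^3) $ 1 $ 2 = 0" "(mat c :: 'a^3^3) $ 1 $ 3 = 0"
  "(mat c :: 'a^3^3) $ 2 $ 1 = 0" "(mat c :: 'a^3^3) $ 2 $ 2 = c" "(mat c :: 'a^3^3) $ 2 $ 3 = 0"
  "(mat c :: 'a^3^3) $ 3 $ 1 = 0" "(mat c :: 'a^3^3) $ 3 $ 2 = 0" "(mat c :: 'a^3^3) $ 3 $ 3 = c"
  by (simp_all add: mat_def)

lemma diag2_nth [simp]:
  "diag2 a b $ 1 $ 1 = a" "diag2 a b $ 1 $ 2 = 0" "diag2 a b $ 2 $ 1 = 0" "diag2 a b $ 2 $ 2 = b"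
  by (simp_all add: diag2_def)

lemma diag3_nth [simp]:
  "diag3 a b c $ 1 $ 1 = a" "diag3 a b c $ 1 $ 2 = 0" "diag3 a b c $ 1 $ 3 = 0"
  "diag3 a b c $ 2 $ 1 = 0" "diag3 a b c $ 2 $ 2 = b" "diag3 a b c $ 2 $ 3 = 0"
  "diag3 a b c $ 3 $ 1 = 0" "diag3 a b c $ 3 $ 2 = 0" "diag3 a b c $ 3 $ 3 = c"
  by (simp_all add: diag3_def)

lemma emb_nth [simp]:
  "emb g $ 1 $ 1 = g$1$1" "emb g $ 1 $ 2 = g$1$2" "emb g $ 1 $ 3 = 0"
  "emb g $ 2 $ 1 = g$2$1" "emb g $ 2 $ 2 = g$2$2" "emb g $ 2 $ 3 = 0"
  "emb g $ 3 $ 1 = 0" "emb g $ 3 $ 2 = 0" "emb g $ 3 $ 3 = 1"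
  by (simp_all add: emb_def)

lemma S1_mult_cnj: "z \<in> S1 \<Longrightarrow> z * cnj z = 1"
  by (simp add: S1_def flip: complex_norm_square)

lemma S1_inverse: "z \<in> S1 \<Longrightarrow> inverse z = cnj z"
  using S1_mult_cnj inverse_unique by blast

lemma S1_nonzero: "z \<in> S1 \<Longrightarrow> z \<noteq> 0"
  by (auto simp: S1_def)

lemma S1_1 [simp]: "1 \<in> S1"
  by (simp add: S1_def)

lemma S1_power: "z \<in> S1 \<Longrightarrow> z ^ n \<in> S1"
  by (simp add: S1_def norm_power)

lemma S1_inverse_closed: "z \<in> S1 \<Longrightarrow> inverse z \<in> S1"
  by (simp add: S1_def norm_inverse)

lemma S1_cancel:
  assumes "z \<in> S1"
  shows "z * cnj z ^ Suc n = cnj z ^ n" and "z ^ Suc n * cnj z ^ n = z"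
proof -
  have "z * cnj z ^ Suc n = (z * cnj z) * cnj z ^ n"
    by (simp add: mult.assoc)
  then show "z * cnj z ^ Suc n = cnj z ^ n"
    using S1_mult_cnj[OF assms] by simp
  have "z ^ Suc n * cnj z ^ n = z * (z ^ n * cnj (z ^ n))"
    by (simp add: mult.assoc)
  then show "z ^ Suc n * cnj z ^ n = z"
    using S1_mult_cnj[OF S1_power[OF assms]] by simp
qed

definition su2 :: "complex \<Rightarrow> complex \<Rightarrow> complex^2^2" where
  "su2 a b = (\<chi> i j. if i = 1 then (if j = 1 then a else - cnj b) else (if j = 1 then b else cnj a))"

lemma su2_nth [simp]:
  "su2 a b $ 1 $ 1 = a" "su2 a b $ 1 $ 2 = - cnj b" "su2 a b $ 2 $ 1 = b" "su2 a b $ 2 $ 2 = cnj a"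
  by (simp_all add: su2_def)

lemma SU_su2: assumes "cmod a ^ 2 + cmod b ^ 2 = 1" shows "su2 a b \<in> SU"
proof -
  have "a * cnj a + b * cnj b = 1"
    using assms by (simp only: flip: complex_norm_square of_real_add) simp
  then show ?thesis
    by (intro SU_I) (simp_all add: mat2_eq_iff matrix_mul_nth_2 det_2 algebra_simps)
qed

lemma SU2_cases:
  assumes "(g::complex^2^2) \<in> SU"
  obtains a b where "g = su2 a b" "cmod a ^ 2 + cmod b ^ 2 = 1"
proof -
  define K :: "complex^2^2" where
    "K = (\<chi> i j. if i = 1 then (if j = 1 then g$2$2 else - g$1$2) else (if j = 1 then - g$2$1 else g$1$1))"
  have "K ** g = mat (det g)"
    unfolding mat2_eq_iff matrix_mul_nth_2 K_def det_2 by (simp add: mult.commute)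
  then have "K ** g = mat 1"
    using SU_det[OF assms] by simp
  then have "adj g = K"
    using SU_unitary[OF assms] by (metis matrix_mul_assoc matrix_mul_lid matrix_mul_rid)
  then have "cnj (g$1$1) = g$2$2" "cnj (g$1$2) = - g$2$1"
    by (simp_all add: mat2_eq_iff K_def)
  then have g: "g = su2 (g$1$1) (g$2$1)"
    by (auto simp: mat2_eq_iff dest: arg_cong[where f = cnj])
  have "(adj g ** g) $ 1 $ 1 = 1"
    using SU_unitary'[OF assms] by simp
  then have "complex_of_real (cmod (g$1$1) ^ 2 + cmod (g$2$1) ^ 2) = 1"
    by (simp add: matrix_mul_nth_2 mult.commute flip: complex_norm_square)
  then show thesis
    using that g by (metis of_real_eq_1_iff)
qed

lemma SU3_cofactors:
  assumes "(U::complex^3^3) \<in> SU"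
  shows "cnj (U$1$1) = U$2$2*U$3$3 - U$2$3*U$3$2"
    and "cnj (U$1$2) = U$2$3*U$3$1 - U$2$1*U$3$3"
    and "cnj (U$2$1) = U$1$3*U$3$2 - U$1$2*U$3$3"
    and "cnj (U$2$2) = U$1$1*U$3$3 - U$1$3*U$3$1"
proof -
  define K :: "complex^3^3" where "K = (\<chi> i j.
    if i = 1 then (if j = 1 then U$2$2*U$3$3 - U$2$3*U$3$2 else if j = 2 then U$1$3*U$3$2 - U$1$2*U$3$3 else U$1$2*U$2$3 - U$1$3*U$2$2)
    else if i = 2 then (if j = 1 then U$2$3*U$3$1 - U$2$1*U$3$3 else if j = 2 then U$1$1*U$3$3 - U$1$3*U$3$1 else U$1$3*U$2$1 - U$1$1*U$2$3)
    else (if j = 1 then U$2$1*U$3$2 - U$2$2*U$3$1 else if j = 2 then U$1$2*U$3$1 - U$1$1*U$3$2 else U$1$1*U$2$2 - U$1$2*U$2$1))"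
  have "K ** U = mat (det U)"
    unfolding mat3_eq_iff matrix_mul_nth_3 K_def mat_def det_3 by (simp; algebra)
  then have "K ** U = mat 1"
    using SU_det[OF assms] by simp
  then have "adj U = K"
    using SU_unitary[OF assms] by (metis matrix_mul_assoc matrix_mul_lid matrix_mul_rid)
  then show "cnj (U$1$1) = U$2$2*U$3$3 - U$2$3*U$3$2"
    and "cnj (U$1$2) = U$2$3*U$3$1 - U$2$1*U$3$3"
    and "cnj (U$2$1) = U$1$3*U$3$2 - U$1$2*U$3$3"
    and "cnj (U$2$2) = U$1$1*U$3$3 - U$1$3*U$3$1"
    by (auto simp: mat3_eq_iff K_def)
qed

lemma SU3_last_column_norm:
  assumes "(U::complex^3^3) \<in> SU"
  shows "cmod (U$1$3) ^ 2 + cmod (U$2$3) ^ 2 + cmod (U$3$3) ^ 2 = 1"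
proof -
  have "(adj U ** U) $ 3 $ 3 = 1"
    using SU_unitary'[OF assms] by simp
  then have "complex_of_real (cmod (U$1$3) ^ 2 + cmod (U$2$3) ^ 2 + cmod (U$3$3) ^ 2) = 1"
    by (simp add: matrix_mul_nth_3 mult.commute flip: complex_norm_square)
  then show ?thesis
    by (metis of_real_eq_1_iff)
qed

lemma SU3_last_row_norm:
  assumes "(U::complex^3^3) \<in> SU"
  shows "cmod (U$3$1) ^ 2 + cmod (U$3$2) ^ 2 + cmod (U$3$3) ^ 2 = 1"
proof -
  have "(U ** adj U) $ 3 $ 3 = 1"
    using SU_unitary[OF assms] by simp
  then have "complex_of_real (cmod (U$3$1) ^ 2 + cmod (U$3$2) ^ 2 + cmod (U$3$3) ^ 2) = 1"
    by (simp add: matrix_mul_nth_3 flip: complex_norm_square)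
  then show ?thesis
    by (metis of_real_eq_1_iff)
qed

lemma SU3_corner_le_1:
  assumes "(U::complex^3^3) \<in> SU" shows "cmod (U$3$3) \<le> 1"
proof -
  have "cmod (U$3$3) ^ 2 \<le> 1"
    using SU3_last_row_norm[OF assms] zero_le_power2[of "cmod (U$3$1)"] zero_le_power2[of "cmod (U$3$2)"]
    by linarith
  then show ?thesis
    by (metis abs_norm_cancel abs_square_le_1)
qed

lemma circ_act_E_p:
  "circ_act (a_p p) (b_p p) z A = diag3 z z (z ^ p) ** A ** diag3 1 1 (inverse z ^ (p + 2))"
proof -
  have "z powi (- (int p + 2)) = inverse z ^ (p + 2)"
    by (metis of_nat_add of_nat_numeral power_int_minus power_int_of_nat power_inverse)
  then show ?thesis
    unfolding circ_act_def a_p_def b_p_def by simp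
qed

lemma circ_act_E_p_nth:
  "circ_act (a_p p) (b_p p) z A $ i $ j =
     (if i = 3 then z ^ p else z) * (if j = 3 then inverse z ^ (p + 2) else 1) * A $ i $ j"
  unfolding circ_act_E_p using exhaust_3[of i] exhaust_3[of j]
  by (elim disjE) (simp_all add: matrix_mul_nth_3)

lemma circ_act_E_p_1 [simp]: "circ_act (a_p p) (b_p p) 1 A = A"
  by (simp add: mat3_eq_iff circ_act_E_p_nth)

lemma circ_act_E_p_inverse:
  "z \<noteq> 0 \<Longrightarrow> circ_act (a_p p) (b_p p) z (circ_act (a_p p) (b_p p) (inverse z) A) = A"
  unfolding mat3_eq_iff circ_act_E_p_nth by (simp add: field_simps)

lemma diag3_unitary:
  "a * cnj a = 1 \<Longrightarrow> b * cnj b = 1 \<Longrightarrow> c * cnj c = 1 \<Longrightarrow> diag3 a b c ** adj (diag3 a b c) = mat 1"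
  by (simp add: mat3_eq_iff matrix_mul_nth_3)

lemma SU_circ_act_E_p:
  assumes z: "z \<in> S1" and A: "A \<in> SU"
  shows "circ_act (a_p p) (b_p p) z A \<in> SU"
proof -
  define D1 where "D1 = diag3 z z (z ^ p)"
  define D2 where "D2 = diag3 1 1 (inverse z ^ (p + 2))"
  have unit: "z ^ n * cnj z ^ n = 1" for n
    using S1_mult_cnj[OF S1_power[OF z]] by simp
  have "cnj z ^ (p + 2) * cnj (cnj z ^ (p + 2)) = 1"
    using unit[of "p + 2"] by (simp only: complex_cnj_power complex_cnj_cnj mult.commute)
  then have "D2 ** adj D2 = mat 1"
    unfolding D2_def S1_inverse[OF z] by (rule diag3_unitary[rotated 2]) simp_all
  moreover have "D1 ** adj D1 = mat 1"
    unfolding D1_def by (rule diag3_unitary) (use unit[of 1] unit[of p] in simp_all)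
  moreover have "D1 ** A ** D2 ** adj (D1 ** A ** D2) = D1 ** (A ** (D2 ** adj D2) ** adj A) ** adj D1"
    by (simp only: adj_matrix_mul matrix_mul_assoc)
  ultimately have "D1 ** A ** D2 ** adj (D1 ** A ** D2) = mat 1"
    using SU_unitary[OF A] by simp
  moreover have "det (D1 ** A ** D2) = 1"
  proof -
    have "det D1 * det D2 = z ^ (p + 2) * inverse z ^ (p + 2)"
      unfolding D1_def D2_def by (simp add: det_3 power_add power2_eq_square mult_ac)
    also have "\<dots> = 1"
      using S1_nonzero[OF z] by (metis power_mult_distrib right_inverse power_one)
    finally show ?thesis
      using SU_det[OF A] by (simp add: det_mul mult.commute)
  qed
  ultimately show ?thesis
    unfolding circ_act_E_p D1_def[symmetric] D2_def[symmetric] by (rule SU_I)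
qed

lemma emb_matrix_mul: "emb X ** emb Y = emb (X ** Y)"
  by (simp add: mat3_eq_iff matrix_mul_nth_3 matrix_mul_nth_2)

lemma adj_emb: "adj (emb g) = emb (adj g)"
  by (simp add: mat3_eq_iff)

lemma emb_mat_1 [simp]: "emb (mat 1) = mat 1"
  by (simp add: mat3_eq_iff)

lemma SU_emb: assumes "g \<in> SU" shows "emb g \<in> SU"
proof (rule SU_I)
  show "emb g ** adj (emb g) = mat 1"
    using SU_unitary[OF assms] by (simp add: adj_emb emb_matrix_mul)
  show "det (emb g) = 1"
    using SU_det[OF assms] by (simp add: det_3 det_2)
qed

lemma SU_Gact: "g \<in> SU \<times> SU \<Longrightarrow> A \<in> SU \<Longrightarrow> Gact g A \<in> SU"
  unfolding Gact_def by (cases g) (auto intro!: SU_matrix_mul SU_emb SU_adj)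

lemma Gact_nth_33 [simp]: "Gact g A $ 3 $ 3 = A $ 3 $ 3"
  by (simp add: Gact_def matrix_mul_nth_3)

section \<open>A curve meeting every orbit\<close>

text \<open>The modulus of the corner entry is invariant under both actions; its arccosine,
  scaled by \<open>sqrt 2\<close>, turns out to be the distance from the orbit of \<open>[A]\<close> to the singular
  orbit through \<open>[mat 1]\<close>.\<close>
definition orbit_coord :: "complex^3^3 \<Rightarrow> real" where
  "orbit_coord A = sqrt 2 * arccos (cmod (A $ 3 $ 3))"

lemma orbit_coord_Gact [simp]: "orbit_coord (Gact g A) = orbit_coord A"
  by (simp add: orbit_coord_def)

lemma orbit_coord_circ_act_E_p [simp]:
  "z \<in> S1 \<Longrightarrow> orbit_coord (circ_act (a_p p) (b_p p) z A) = orbit_coord A"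
  by (simp add: orbit_coord_def circ_act_E_p_nth norm_mult norm_power norm_inverse S1_def)

lemma orbit_coord_same_Gorbit:
  "same_Gorbit (a_p p) (b_p p) A B \<Longrightarrow> orbit_coord B = orbit_coord A"
  unfolding same_Gorbit_def by auto

definition rot :: "real \<Rightarrow> complex^3^3" where
  "rot \<theta> = (\<chi> i j. if i = 1 then (if j = 1 then 1 else 0)
    else if i = 2 then (if j = 1 then 0 else if j = 2 then of_real (cos \<theta>) else - of_real (sin \<theta>))
    else (if j = 1 then 0 else if j = 2 then of_real (sin \<theta>) else of_real (cos \<theta>)))"

lemma rot_nth [simp]:
  "rot \<theta> $ 1 $ 1 = 1" "rot \<theta> $ 1 $ 2 = 0" "rot \<theta> $ 1 $ 3 = 0"
  "rot \<theta> $ 2 $ 1 = 0" "rot \<theta> $ 2 $ 2 = of_real (cos \<theta>)" "rot \<theta> $ 2 $ 3 = - of_real (sin \<theta>)"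
  "rot \<theta> $ 3 $ 1 = 0" "rot \<theta> $ 3 $ 2 = of_real (sin \<theta>)" "rot \<theta> $ 3 $ 3 = of_real (cos \<theta>)"
  by (simp_all add: rot_def)

lemma rot_0: "rot 0 = mat 1"
  by (simp add: mat3_eq_iff)

lemma SU_rot: "rot \<theta> \<in> SU"
proof (rule SU_I)
  have cs: "complex_of_real (cos \<theta>) * complex_of_real (cos \<theta>) +
      complex_of_real (sin \<theta>) * complex_of_real (sin \<theta>) = 1"
    by (metis of_real_1 of_real_add of_real_mult sin_cos_squared_add3)
  then show "rot \<theta> ** adj (rot \<theta>) = mat 1"
    by (simp add: mat3_eq_iff matrix_mul_nth_3 mult.commute add.commute)
  show "det (rot \<theta>) = 1"
    using cs by (simp add: det_3)
qed

lemma orbit_coord_rot: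
  assumes "0 \<le> \<theta>" "\<theta> \<le> pi / 2" shows "orbit_coord (rot \<theta>) = sqrt 2 * \<theta>"
proof -
  have "0 \<le> cos \<theta>"
    using assms by (intro cos_ge_zero) auto
  then show ?thesis
    using assms by (simp add: orbit_coord_def arccos_cos)
qed

lemma circ_act_E_p_real_corner:
  assumes "A \<in> SU"
  obtains z B where "z \<in> S1" "B \<in> SU" "A = circ_act (a_p p) (b_p p) z B"
    "B $ 3 $ 3 = of_real (cmod (A $ 3 $ 3))"
proof -
  define w where "w = A $ 3 $ 3"
  define z where "z = cis (- Arg w / 2)"
  have z: "z \<in> S1"
    by (simp add: z_def S1_def)
  have "z ^ 2 * w = cis (- Arg w) * (of_real (cmod w) * cis (Arg w))"
    unfolding z_def by (simp add: power2_eq_square cis_mult rcis_cmod_Arg flip: rcis_def)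
  also have "\<dots> = of_real (cmod w)"
    by (simp add: cis_mult)
  finally have zw: "z ^ 2 * w = of_real (cmod w)" .
  define B where "B = circ_act (a_p p) (b_p p) (inverse z) A"
  have "B $ 3 $ 3 = z ^ 2 * w"
    using S1_nonzero[OF z]
    by (simp add: B_def w_def circ_act_E_p_nth power_add field_simps power2_eq_square)
  moreover have "A = circ_act (a_p p) (b_p p) z B"
    unfolding B_def using circ_act_E_p_inverse[OF S1_nonzero[OF z]] by simp
  moreover have "B \<in> SU"
    unfolding B_def by (rule SU_circ_act_E_p[OF S1_inverse_closed[OF z] assms])
  ultimately show thesis
    using that z zw w_def by simp
qed

lemma SU3_block_of_corner_1:
  assumes A: "A \<in> SU" and A33: "A $ 3 $ 3 = 1"
  obtains g where "g \<in> SU" "A = emb g"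
proof -
  have "cmod (A$1$3) ^ 2 + cmod (A$2$3) ^ 2 = 0" "cmod (A$3$1) ^ 2 + cmod (A$3$2) ^ 2 = 0"
    using SU3_last_column_norm[OF A] SU3_last_row_norm[OF A] A33 by simp_all
  then have zero: "A$1$3 = 0" "A$2$3 = 0" "A$3$1 = 0" "A$3$2 = 0"
    by (simp_all add: add_nonneg_eq_0_iff)
  define g :: "complex^2^2" where "g = (\<chi> i j. A $ (if i = 1 then 1 else 2) $ (if j = 1 then 1 else 2))"
  have Ag: "A = emb g"
    using zero A33 by (simp add: mat3_eq_iff g_def)
  have "emb (g ** adj g) = mat 1"
    using SU_unitary[OF A] by (simp add: Ag adj_emb emb_matrix_mul)
  then have "g ** adj g = mat 1"
    by (simp add: mat3_eq_iff mat2_eq_iff)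
  moreover have "det g = 1"
    using SU_det[OF A] by (simp add: Ag det_3 det_2)
  ultimately show thesis
    using that Ag SU_I by blast
qed

lemma cnj_swap_eq_zero:
  assumes "cnj d = c * e" "cnj e = c * d" "cmod c < 1"
  shows "d = 0"
proof -
  have "cnj d = (c * cnj c) * cnj d"
    using assms(1,2) by (metis complex_cnj_cnj complex_cnj_mult mult.assoc)
  then have "cnj d * (1 - c * cnj c) = 0"
    by (simp add: algebra_simps)
  moreover have "cmod c ^ 2 < 1"
    using assms(3) abs_square_less_1[of "cmod c"] by simp
  then have "c * cnj c \<noteq> 1"
    by (metis complex_norm_square of_real_eq_1_iff less_irrefl)
  ultimately show "d = 0"
    by simp
qed

lemma SU3_eqI_last_row_column:
  fixes U V :: "complex^3^3"
  assumes U: "U \<in> SU" and V: "V \<in> SU"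
    and eq: "U$1$3 = V$1$3" "U$2$3 = V$2$3" "U$3$1 = V$3$1" "U$3$2 = V$3$2" "U$3$3 = V$3$3"
    and lt: "cmod (U$3$3) < 1"
  shows "U = V"
proof -
  \<comment> \<open>By the cofactor formulas, each difference in the upper-left block is conjugate to
    \<open>\<plusminus>U\<^sub>3\<^sub>3\<close> times another one, and \<open>\<bar>U\<^sub>3\<^sub>3\<bar> < 1\<close> forces all of them to vanish.\<close>
  note cu = SU3_cofactors[OF U] and cv = SU3_cofactors[OF V]
  have d1: "cnj (U$1$1 - V$1$1) = U$3$3 * (U$2$2 - V$2$2)"
    and d2: "cnj (U$2$2 - V$2$2) = U$3$3 * (U$1$1 - V$1$1)"
    and d3: "cnj (U$1$2 - V$1$2) = - U$3$3 * (U$2$1 - V$2$1)"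
    and d4: "cnj (U$2$1 - V$2$1) = - U$3$3 * (U$1$2 - V$1$2)"
    unfolding complex_cnj_diff cu cv using eq by (simp_all add: algebra_simps)
  have lt': "cmod (- U$3$3) < 1"
    using lt by simp
  show ?thesis
    using cnj_swap_eq_zero[OF d1 d2 lt] cnj_swap_eq_zero[OF d2 d1 lt]
      cnj_swap_eq_zero[OF d3 d4 lt'] cnj_swap_eq_zero[OF d4 d3 lt'] eq
    by (simp add: mat3_eq_iff)
qed

lemma SU3_Gact_rot_of_real_corner:
  assumes A: "A \<in> SU" and A33: "A $ 3 $ 3 = of_real c" and c: "0 \<le> c"
  shows "\<exists>g\<in>SU \<times> SU. \<exists>\<theta>\<in>{0..pi/2}. A = Gact g (rot \<theta>)"
proof (cases "c = 1")
  case True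
  then obtain g where "g \<in> SU" "A = emb g"
    using SU3_block_of_corner_1[OF A] A33 by auto
  then have "A = Gact (g, mat 1) (rot 0)"
    by (simp add: Gact_def rot_0)
  then show ?thesis
    using \<open>g \<in> SU\<close> by force
next
  case False
  then have c1: "c < 1"
    using SU3_corner_le_1[OF A] A33 c by simp
  define \<theta> where "\<theta> = arccos c"
  define s where "s = sin \<theta>"
  have \<theta>: "\<theta> \<in> {0..pi/2}" and cos\<theta>: "cos \<theta> = c"
    using c c1 arccos_le_pi2[of c] arccos_lbound[of c] by (simp_all add: \<theta>_def)
  have s2: "s ^ 2 = 1 - c ^ 2"
    by (simp add: s_def sin_squared_eq cos\<theta>)
  have s0: "s > 0"
    using c c1 abs_square_less_1[of c] by (simp add: s_def \<theta>_def sin_arccos)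
  have "cmod (A$1$3) ^ 2 + cmod (A$2$3) ^ 2 = s ^ 2" "cmod (A$3$1) ^ 2 + cmod (A$3$2) ^ 2 = s ^ 2"
    using SU3_last_column_norm[OF A] SU3_last_row_norm[OF A] A33 c s2 by simp_all
  then have norms: "cmod (- cnj (A$2$3) / s) ^ 2 + cmod (cnj (A$1$3) / s) ^ 2 = 1"
    "cmod (A$3$2 / s) ^ 2 + cmod (- A$3$1 / s) ^ 2 = 1"
    using s0 by (simp_all add: norm_divide power_divide add_divide_distrib[symmetric])
  \<comment> \<open>The first factor is read off from the last column of \<open>A\<close>, the second from its last row.\<close>
  define g where "g = (su2 (- cnj (A$2$3) / s) (cnj (A$1$3) / s), su2 (A$3$2 / s) (- A$3$1 / s))"
  have g: "g \<in> SU \<times> SU"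
    using norms by (simp add: g_def SU_su2)
  have "Gact g (rot \<theta>) = A"
  proof (rule SU3_eqI_last_row_column[OF SU_Gact[OF g SU_rot] A])
    have "complex_of_real s \<noteq> 0"
      using s0 by simp
    then show "Gact g (rot \<theta>) $ 1 $ 3 = A $ 1 $ 3" "Gact g (rot \<theta>) $ 2 $ 3 = A $ 2 $ 3"
      "Gact g (rot \<theta>) $ 3 $ 1 = A $ 3 $ 1" "Gact g (rot \<theta>) $ 3 $ 2 = A $ 3 $ 2"
      by (simp_all add: Gact_def g_def matrix_mul_nth_3 s_def)
    show "Gact g (rot \<theta>) $ 3 $ 3 = A $ 3 $ 3" "cmod (Gact g (rot \<theta>) $ 3 $ 3) < 1"
      using A33 cos\<theta> c c1 by simp_all
  qed
  then show ?thesis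
    using g \<theta> by blast
qed

lemma SU3_normal_form:
  assumes "A \<in> SU"
  shows "\<exists>z\<in>S1. \<exists>g\<in>SU \<times> SU. \<exists>\<theta>\<in>{0..pi/2}.
    A = circ_act (a_p p) (b_p p) z (Gact g (rot \<theta>))"
proof -
  obtain z B where "z \<in> S1" "B \<in> SU" "A = circ_act (a_p p) (b_p p) z B"
    "B $ 3 $ 3 = of_real (cmod (A $ 3 $ 3))"
    using circ_act_E_p_real_corner[OF assms] .
  then show ?thesis
    using SU3_Gact_rot_of_real_corner[of B "cmod (A $ 3 $ 3)"] by fastforce
qed

lemma same_Gorbit_rot: "A \<in> SU \<Longrightarrow> \<exists>\<theta>\<in>{0..pi/2}. same_Gorbit (a_p p) (b_p p) (rot \<theta>) A"
  using SU3_normal_form unfolding same_Gorbit_def by blast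

section \<open>Isotropy groups along the curve\<close>

lemma sign_power_square: "(e::complex) = 1 \<or> e = -1 \<Longrightarrow> e ^ n * e ^ n = 1"
  by (auto simp flip: power_mult_distrib)

lemma sign_power: "(e::complex) = 1 \<or> e = -1 \<Longrightarrow> e ^ n = 1 \<or> e ^ n = -1"
  by (cases "even n") (auto simp: minus_one_power_iff)

lemma SU_mat_sign:
  assumes "(e::complex) = 1 \<or> e = -1" shows "(mat e :: complex^2^2) \<in> SU"
proof -
  have "mat e = su2 e 0"
    using assms by (auto simp: mat2_eq_iff)
  then show ?thesis
    using assms SU_su2[of e 0] by auto
qed

lemma SU_diag2:
  assumes "z \<in> S1" shows "diag2 z (cnj z) \<in> SU"
proof -
  have "diag2 z (cnj z) = su2 z 0"
    by (simp add: mat2_eq_iff)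
  then show ?thesis
    using assms SU_su2[of z 0] by (simp add: S1_def)
qed

lemma H_p_SU: "H_p p \<subseteq> SU \<times> SU"
  unfolding H_p_def using SU_mat_sign[OF sign_power] by blast

lemma isotropy_E_p_sign:
  assumes eq: "Gact g A = circ_act (a_p p) (b_p p) z A" and z: "z \<in> S1" and A33: "A $ 3 $ 3 \<noteq> 0"
  shows "z = 1 \<or> z = -1"
proof -
  have zz: "z ^ p * inverse z ^ p = 1"
    using S1_nonzero[OF z] by (simp flip: power_mult_distrib)
  have "1 = z ^ p * inverse z ^ (p + 2)"
    using arg_cong[OF eq, of "\<lambda>M. M $ 3 $ 3"] A33 by (simp add: circ_act_E_p_nth)
  also have "\<dots> = inverse z ^ 2"
    by (metis zz power_add mult.assoc mult_1)
  finally have "z ^ 2 = 1"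
    by (metis power_inverse inverse_1 inverse_inverse_eq)
  then show ?thesis
    by (simp add: power2_eq_1_iff)
qed

lemma Gact_mat_1: "Gact (g1, g2) (mat 1) = emb (g1 ** adj g2)"
  by (simp add: Gact_def emb_matrix_mul)

lemma Kminus_p_subset_isotropy: "Kminus_p p \<subseteq> isotropy (a_p p) (b_p p) (mat 1)"
proof
  fix g assume "g \<in> Kminus_p p"
  then obtain g0 e where g0: "g0 \<in> SU" and e: "e = 1 \<or> e = -1"
    and g: "g = (g0 ** mat (e ^ (p + 1)), g0 ** mat (e ^ p))"
    unfolding Kminus_p_def H_p_def by auto
  have "g0 ** mat (e ^ (p + 1)) ** adj (g0 ** mat (e ^ p)) = g0 ** mat (e ^ (p + 1) * cnj e ^ p) ** adj g0"
    by (simp add: adj_matrix_mul matrix_mul_assoc mat2_eq_iff matrix_mul_nth_2)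
  also have "\<dots> = mat e ** (g0 ** adj g0)"
    using e sign_power_square[OF e, of p]
    by (auto simp: mat2_eq_iff matrix_mul_nth_2 mult_ac)
  finally have "g0 ** mat (e ^ (p + 1)) ** adj (g0 ** mat (e ^ p)) = mat e"
    using SU_unitary[OF g0] by simp
  moreover have "e ^ p * inverse e ^ (p + 2) = 1"
    using e by (auto simp flip: power_mult_distrib power_add)
  ultimately have "Gact g (mat 1) = circ_act (a_p p) (b_p p) e (mat 1)"
    unfolding g Gact_mat_1 by (simp add: mat3_eq_iff circ_act_E_p_nth)
  moreover have "g \<in> SU \<times> SU"
    unfolding g using SU_matrix_mul[OF g0 SU_mat_sign[OF sign_power[OF e]]] by blast
  moreover have "e \<in> S1"
    using e by (auto simp: S1_def)
  ultimately show "g \<in> isotropy (a_p p) (b_p p) (mat 1)"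
    unfolding isotropy_def by auto
qed

lemma isotropy_E_p_mat_1: "isotropy (a_p p) (b_p p) (mat 1) = Kminus_p p"
proof (rule antisym[OF subsetI Kminus_p_subset_isotropy])
  fix g assume "g \<in> isotropy (a_p p) (b_p p) (mat 1)"
  then obtain g1 g2 z where g: "g = (g1, g2)" "g1 \<in> SU" "g2 \<in> SU" "z \<in> S1"
    and eq: "Gact (g1, g2) (mat 1) = circ_act (a_p p) (b_p p) z (mat 1)"
    unfolding isotropy_def by auto
  have e: "z = 1 \<or> z = -1"
    using isotropy_E_p_sign[OF eq g(4)] by simp
  have "g1 ** adj g2 = mat z"
    using eq by (simp add: Gact_mat_1 mat3_eq_iff mat2_eq_iff circ_act_E_p_nth)
  then have g1: "g1 = mat z ** g2"
    by (metis SU_unitary'[OF g(3)] matrix_mul_assoc matrix_mul_rid)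
  define g0 where "g0 = g2 ** mat (z ^ p)"
  have "g1 = g0 ** mat (z ^ (p + 1))" "g2 = g0 ** mat (z ^ p)"
    using sign_power_square[OF e, of p] e
    by (auto simp: g1 g0_def mat2_eq_iff matrix_mul_nth_2 mult.assoc)
  moreover have "g0 \<in> SU"
    unfolding g0_def by (intro SU_matrix_mul g(3) SU_mat_sign sign_power e)
  moreover have "(mat (z ^ (p + 1)), mat (z ^ p)) \<in> H_p p"
    unfolding H_p_def using e by blast
  ultimately show "g \<in> Kminus_p p"
    unfolding Kminus_p_def g(1) by force
qed

lemma isotropy_E_p_rot_pi_half: "isotropy (a_p p) (b_p p) (rot (pi/2)) = Kplus_p p"
proof (intro set_eqI iffI)
  fix g assume "g \<in> isotropy (a_p p) (b_p p) (rot (pi/2))"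
  then obtain g1 g2 z where g: "g = (g1, g2)" "g1 \<in> SU" "g2 \<in> SU" and z: "z \<in> S1"
    and eq: "Gact (g1, g2) (rot (pi/2)) = circ_act (a_p p) (b_p p) z (rot (pi/2))"
    unfolding isotropy_def by auto
  obtain a1 b1 a2 b2 where g1: "g1 = su2 a1 b1" and g2: "g2 = su2 a2 b2"
    using SU2_cases[OF g(2)] SU2_cases[OF g(3)] by metis
  have ent: "Gact (g1, g2) (rot (pi/2)) $ i $ j = circ_act (a_p p) (b_p p) z (rot (pi/2)) $ i $ j" for i j
    using eq by simp
  have "b1 = 0" "cnj a1 = z * cnj z ^ Suc (Suc p)" "b2 = 0" "a2 = z ^ p"
    using ent[of 1 3] ent[of 2 3] ent[of 3 1] ent[of 3 2]
    by (simp_all add: Gact_def g1 g2 matrix_mul_nth_3 circ_act_E_p_nth S1_inverse[OF z])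
  moreover have "a1 = z ^ Suc p"
    using calculation(2) S1_cancel(1)[OF z, of "Suc p"] by (metis complex_cnj_cnj complex_cnj_power)
  ultimately have "g1 = diag2 (z ^ (p + 1)) (cnj z ^ (p + 1))" "g2 = diag2 (z ^ p) (cnj z ^ p)"
    by (simp_all add: g1 g2 mat2_eq_iff)
  then show "g \<in> Kplus_p p"
    unfolding Kplus_p_def using g(1) z by blast
next
  fix g assume "g \<in> Kplus_p p"
  then obtain w where w: "w \<in> S1" and g: "g = (diag2 (w ^ (p + 1)) (cnj w ^ (p + 1)), diag2 (w ^ p) (cnj w ^ p))"
    unfolding Kplus_p_def by auto
  have "diag2 (w ^ n) (cnj w ^ n) \<in> SU" for n
    using SU_diag2[OF S1_power[OF w]] by simp
  then have "g \<in> SU \<times> SU"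
    unfolding g by blast
  moreover have "Gact g (rot (pi/2)) = circ_act (a_p p) (b_p p) w (rot (pi/2))"
    unfolding g mat3_eq_iff using S1_cancel[OF w, of p] S1_cancel(1)[OF w, of "p + 1"]
    by (simp add: Gact_def matrix_mul_nth_3 circ_act_E_p_nth S1_inverse[OF w])
  ultimately show "g \<in> isotropy (a_p p) (b_p p) (rot (pi/2))"
    unfolding isotropy_def using w by auto
qed

lemma H_p_subset_isotropy: "H_p p \<subseteq> isotropy (a_p p) (b_p p) A"
proof
  fix g assume g: "g \<in> H_p p"
  then obtain e where e: "e = 1 \<or> e = -1" and g_eq: "g = (mat (e ^ (p + 1)), mat (e ^ p))"
    unfolding H_p_def by auto
  have "Gact g A = circ_act (a_p p) (b_p p) e A"
    unfolding g_eq mat3_eq_iff using e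
    by (auto simp: Gact_def matrix_mul_nth_3 circ_act_E_p_nth minus_one_power_iff split: if_splits)
  moreover have "e \<in> S1"
    using e by (auto simp: S1_def)
  ultimately show "g \<in> isotropy (a_p p) (b_p p) A"
    unfolding isotropy_def using g H_p_SU by auto
qed

lemma isotropy_E_p_rot:
  assumes "0 < \<theta>" "\<theta> < pi/2"
  shows "isotropy (a_p p) (b_p p) (rot \<theta>) = H_p p"
proof (rule antisym[OF subsetI H_p_subset_isotropy])
  have sin: "sin \<theta> \<noteq> 0" and cos: "cos \<theta> \<noteq> 0"
    using assms sin_gt_zero[of \<theta>] cos_gt_zero[of \<theta>] by auto
  fix g assume "g \<in> isotropy (a_p p) (b_p p) (rot \<theta>)"
  then obtain g1 g2 z where g: "g = (g1, g2)" "g1 \<in> SU" "g2 \<in> SU" "z \<in> S1"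
    and eq: "Gact (g1, g2) (rot \<theta>) = circ_act (a_p p) (b_p p) z (rot \<theta>)"
    unfolding isotropy_def by auto
  have e: "z = 1 \<or> z = -1"
    using isotropy_E_p_sign[OF eq g(4)] cos by simp
  obtain a1 b1 a2 b2 where g1: "g1 = su2 a1 b1" and g2: "g2 = su2 a2 b2"
    using SU2_cases[OF g(2)] SU2_cases[OF g(3)] by metis
  have ent: "Gact (g1, g2) (rot \<theta>) $ i $ j = circ_act (a_p p) (b_p p) z (rot \<theta>) $ i $ j" for i j
    using eq by simp
  have "b1 = 0" "cnj a1 = z * inverse z ^ (p + 2)" "b2 = 0" "a2 = z ^ p"
    using ent[of 1 3] ent[of 2 3] ent[of 3 1] ent[of 3 2] sin
    by (simp_all add: Gact_def g1 g2 matrix_mul_nth_3 circ_act_E_p_nth)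
  then have "g1 = mat (z ^ (p + 1))" "g2 = mat (z ^ p)"
    using e by (auto simp: g1 g2 mat2_eq_iff minus_one_power_iff dest: arg_cong[where f = cnj])
  then show "g \<in> H_p p"
    unfolding H_p_def using g(1) e by blast
qed

section \<open>Smooth curves of matrices\<close>

lemma has_vector_derivative_componentwise:
  fixes f :: "real \<Rightarrow> 'a::real_normed_vector^'n"
  assumes "\<And>i. ((\<lambda>x. f x $ i) has_vector_derivative f' $ i) F"
  shows "(f has_vector_derivative f') F"
  using assms unfolding has_vector_derivative_def has_derivative_def
  by (auto intro!: vec_tendstoI bounded_linear_scaleR_left)

lemma has_vector_derivative_vec_nth:
  "(f has_vector_derivative f') F \<Longrightarrow> ((\<lambda>x. f x $ i) has_vector_derivative f' $ i) F"
  by (rule bounded_linear.has_vector_derivative[OF bounded_linear_vec_nth])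

lemma has_vector_derivative_matrix_mul:
  fixes f :: "real \<Rightarrow> complex^'n^'m" and g :: "real \<Rightarrow> complex^'k^'n"
  assumes f: "(f has_vector_derivative f') (at x within S)"
    and g: "(g has_vector_derivative g') (at x within S)"
  shows "((\<lambda>y. f y ** g y) has_vector_derivative (f' ** g x + f x ** g')) (at x within S)"
proof (intro has_vector_derivative_componentwise)
  fix i j
  have "((\<lambda>y. f y $ i $ k * g y $ k $ j) has_vector_derivative
      (f x $ i $ k * g' $ k $ j + f' $ i $ k * g x $ k $ j)) (at x within S)" for k
    using f g by (intro has_vector_derivative_mult has_vector_derivative_vec_nth)
  then show "((\<lambda>y. (f y ** g y) $ i $ j) has_vector_derivative (f' ** g x + f x ** g') $ i $ j) (at x within S)"
    unfolding matrix_matrix_mult_def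
    by (auto intro!: has_vector_derivative_eq_rhs[OF has_vector_derivative_sum]
        simp: sum.distrib algebra_simps)
qed

lemma has_vector_derivative_adj:
  "(f has_vector_derivative f') F \<Longrightarrow> ((\<lambda>y. adj (f y)) has_vector_derivative adj f') F"
  by (intro has_vector_derivative_componentwise)
    (simp add: bounded_linear.has_vector_derivative[OF bounded_linear_cnj] has_vector_derivative_vec_nth)

lemma C1_differentiable_on_componentwise:
  fixes f :: "real \<Rightarrow> 'a::real_normed_vector^'n"
  assumes "\<And>i. (\<lambda>x. f x $ i) C1_differentiable_on S"
  shows "f C1_differentiable_on S"
proof -
  obtain D where D: "\<And>i. \<forall>x\<in>S. ((\<lambda>x. f x $ i) has_vector_derivative D i x) (at x)"
    "\<And>i. continuous_on S (D i)"
    using assms unfolding C1_differentiable_on_def by metis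
  then have "\<forall>x\<in>S. (f has_vector_derivative (\<chi> i. D i x)) (at x)"
    by (auto intro!: has_vector_derivative_componentwise)
  moreover have "continuous_on S (\<lambda>x. \<chi> i. D i x)"
    using D(2) by (auto intro!: continuous_on_vec_lambda)
  ultimately show ?thesis
    unfolding C1_differentiable_on_def by (intro exI[of _ "\<lambda>x. \<chi> i. D i x"] conjI)
qed

lemma C1_differentiable_on_vec_nth:
  assumes "f C1_differentiable_on S" shows "(\<lambda>x. f x $ i) C1_differentiable_on S"
proof -
  obtain D where "\<forall>x\<in>S. (f has_vector_derivative D x) (at x)" "continuous_on S D"
    using assms unfolding C1_differentiable_on_def by blast
  then show ?thesis
    unfolding C1_differentiable_on_def
    by (auto intro!: exI[of _ "\<lambda>x. D x $ i"] has_vector_derivative_vec_nth continuous_on_component)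
qed

lemma C1_differentiable_on_sum:
  "finite I \<Longrightarrow> (\<And>i. i \<in> I \<Longrightarrow> f i C1_differentiable_on S) \<Longrightarrow>
    (\<lambda>x. \<Sum>i\<in>I. f i x) C1_differentiable_on S"
  by (induction I rule: finite_induct) auto

lemma C1_differentiable_on_matrix_mul:
  fixes f :: "real \<Rightarrow> complex^'n^'m" and g :: "real \<Rightarrow> complex^'k^'n"
  assumes "f C1_differentiable_on S" "g C1_differentiable_on S"
  shows "(\<lambda>x. f x ** g x) C1_differentiable_on S"
proof (intro C1_differentiable_on_componentwise)
  fix i j
  have "(\<lambda>x. f x $ i $ k * g x $ k $ j) C1_differentiable_on S" for k
    using assms by (intro C1_differentiable_on_mult C1_differentiable_on_vec_nth)
  then show "(\<lambda>x. (f x ** g x) $ i $ j) C1_differentiable_on S"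
    unfolding matrix_matrix_mult_def by (simp add: C1_differentiable_on_sum)
qed

lemma C1_differentiable_on_cnj:
  assumes "f C1_differentiable_on S" shows "(\<lambda>x. cnj (f x)) C1_differentiable_on S"
proof -
  obtain D where "\<forall>x\<in>S. (f has_vector_derivative D x) (at x)" "continuous_on S D"
    using assms unfolding C1_differentiable_on_def by blast
  then show ?thesis
    unfolding C1_differentiable_on_def
    by (auto intro!: exI[of _ "\<lambda>x. cnj (D x)"] continuous_intros
        bounded_linear.has_vector_derivative[OF bounded_linear_cnj])
qed

lemma C1_differentiable_on_of_real_compose:
  assumes "\<And>x. (f has_real_derivative f' x) (at x)" "continuous_on S f'"
  shows "(\<lambda>x. complex_of_real (f x)) C1_differentiable_on S"
  unfolding C1_differentiable_on_def using assms
  by (auto intro!: exI[of _ "\<lambda>x. complex_of_real (f' x)"] has_vector_derivative_of_real continuous_intros)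

lemma C1_differentiable_on_cos_affine: "(\<lambda>x. complex_of_real (cos (a + x * d))) C1_differentiable_on S"
  by (rule C1_differentiable_on_of_real_compose[where f' = "\<lambda>x. - sin (a + x * d) * d"])
    (auto intro!: derivative_eq_intros continuous_intros)

lemma C1_differentiable_on_sin_affine: "(\<lambda>x. complex_of_real (sin (a + x * d))) C1_differentiable_on S"
  by (rule C1_differentiable_on_of_real_compose[where f' = "\<lambda>x. cos (a + x * d) * d"])
    (auto intro!: derivative_eq_intros continuous_intros)

lemma C1_differentiable_on_cis_affine: "(\<lambda>x. cis (a + x * d)) C1_differentiable_on S"
proof -
  have "cis = (\<lambda>t. complex_of_real (cos t) + \<i> * complex_of_real (sin t))"
    by (simp add: fun_eq_iff complex_eq_iff)
  then show ?thesis
    unfolding \<open>cis = _\<close>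
    by (intro C1_differentiable_on_add C1_differentiable_on_mult C1_differentiable_on_cos_affine C1_differentiable_on_sin_affine
        C1_differentiable_on_const)
qed

lemma C1_differentiable_on_su2:
  assumes "a C1_differentiable_on S" "b C1_differentiable_on S"
  shows "(\<lambda>x. su2 (a x) (b x)) C1_differentiable_on S"
proof (intro C1_differentiable_on_componentwise)
  fix i j :: 2
  show "(\<lambda>x. su2 (a x) (b x) $ i $ j) C1_differentiable_on S"
    using exhaust_2[of i] exhaust_2[of j] assms
    by (auto intro!: C1_differentiable_on_minus C1_differentiable_on_cnj)
qed

lemma C1_differentiable_on_emb:
  assumes "f C1_differentiable_on S" shows "(\<lambda>x. emb (f x)) C1_differentiable_on S"
proof (intro C1_differentiable_on_componentwise)
  fix i j :: 3
  show "(\<lambda>x. emb (f x) $ i $ j) C1_differentiable_on S"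
    using exhaust_3[of i] exhaust_3[of j] C1_differentiable_on_vec_nth[OF C1_differentiable_on_vec_nth[OF assms]]
    by auto
qed

lemma C1_differentiable_on_diag3:
  assumes "f1 C1_differentiable_on S" "f2 C1_differentiable_on S" "f3 C1_differentiable_on S"
  shows "(\<lambda>x. diag3 (f1 x) (f2 x) (f3 x)) C1_differentiable_on S"
proof (intro C1_differentiable_on_componentwise)
  fix i j :: 3
  show "(\<lambda>x. diag3 (f1 x) (f2 x) (f3 x) $ i $ j) C1_differentiable_on S"
    using exhaust_3[of i] exhaust_3[of j] assms by auto
qed

lemma C1_differentiable_on_rot: "(\<lambda>x. rot (a + x * d)) C1_differentiable_on S"
proof (intro C1_differentiable_on_componentwise)
  fix i j :: 3
  show "(\<lambda>x. rot (a + x * d) $ i $ j) C1_differentiable_on S"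
    using exhaust_3[of i] exhaust_3[of j] C1_differentiable_on_cos_affine C1_differentiable_on_sin_affine by auto
qed

lemma SU2_C1_path:
  assumes "(g::complex^2^2) \<in> SU"
  obtains \<gamma> where "\<gamma> C1_differentiable_on S" "\<And>t. \<gamma> t \<in> SU" "\<gamma> 0 = mat 1" "\<gamma> 1 = g"
proof -
  obtain a b where g: "g = su2 a b" and ab: "cmod a ^ 2 + cmod b ^ 2 = 1"
    using SU2_cases[OF assms] .
  define \<phi> where "\<phi> = arccos (cmod a)"
  have "cmod a \<le> 1"
    using ab by (metis abs_norm_cancel abs_square_le_1 le_add_same_cancel1 zero_le_power2)
  moreover have "-1 \<le> cmod a"
    by (rule order_trans[of _ 0]) simp_all
  ultimately have "cos \<phi> = cmod a" "sin \<phi> = cmod b"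
    using ab by (simp_all add: \<phi>_def sin_arccos real_sqrt_unique)
  then have "su2 (cos \<phi> * cis (Arg a)) (sin \<phi> * cis (Arg b)) = g"
    by (simp add: g rcis_cmod_Arg flip: rcis_def)
  define \<gamma> where "\<gamma> t = su2 (cos (t * \<phi>) * cis (t * Arg a)) (sin (t * \<phi>) * cis (t * Arg b))" for t
  have "\<gamma> C1_differentiable_on S"
    unfolding \<gamma>_def
    using C1_differentiable_on_cos_affine[of 0] C1_differentiable_on_sin_affine[of 0]
      C1_differentiable_on_cis_affine[of 0]
    by (intro C1_differentiable_on_su2 C1_differentiable_on_mult) simp_all
  moreover have "\<gamma> t \<in> SU" for t
    unfolding \<gamma>_def by (rule SU_su2) (simp add: norm_mult power_mult_distrib)
  moreover have "\<gamma> 0 = mat 1"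
    by (simp add: \<gamma>_def mat2_eq_iff)
  moreover have "\<gamma> 1 = g"
    using \<open>su2 _ _ = g\<close> by (simp add: \<gamma>_def)
  ultimately show thesis
    using that by blast
qed

lemma SU_C1_path_from_1:
  fixes U :: "complex^3^3"
  assumes "U \<in> SU"
  obtains P where "P C1_differentiable_on S" "\<And>t. P t \<in> SU" "P 0 = mat 1" "P 1 = U"
proof -
  obtain z g \<theta> where z: "z \<in> S1" and g: "g \<in> SU \<times> SU"
    and U: "U = circ_act (a_p 0) (b_p 0) z (Gact g (rot \<theta>))"
    using SU3_normal_form[OF assms] by blast
  obtain g1 g2 where g12: "g = (g1, g2)" "g1 \<in> SU" "g2 \<in> SU"
    using g by auto
  obtain \<gamma>1 where \<gamma>1: "\<gamma>1 C1_differentiable_on S" "\<And>t. \<gamma>1 t \<in> SU" "\<gamma>1 0 = mat 1" "\<gamma>1 1 = g1"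
    using SU2_C1_path[OF g12(2), where S = S] by blast
  obtain \<gamma>2 where \<gamma>2: "\<gamma>2 C1_differentiable_on S" "\<And>t. \<gamma>2 t \<in> SU" "\<gamma>2 0 = mat 1" "\<gamma>2 1 = adj g2"
    using SU2_C1_path[OF SU_adj[OF g12(3)], where S = S] by blast
  have zc: "z = cis (Arg z)"
    using rcis_cmod_Arg[of z] z unfolding S1_def by (simp add: rcis_def)
  define P where "P t = circ_act (a_p 0) (b_p 0) (cis (t * Arg z))
     (Gact (\<gamma>1 t, adj (\<gamma>2 t)) (rot (t * \<theta>)))" for t
  have "P = (\<lambda>t. diag3 (cis (t * Arg z)) (cis (t * Arg z)) 1 **
      (emb (\<gamma>1 t) ** rot (t * \<theta>) ** emb (\<gamma>2 t)) ** diag3 1 1 (cis (- (t * Arg z)) * cis (- (t * Arg z))))"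
    unfolding P_def circ_act_E_p Gact_def by (simp add: matrix_mul_assoc fun_eq_iff)
  moreover have "(\<lambda>t. cis (t * Arg z)) C1_differentiable_on S"
    "(\<lambda>t. cis (- (t * Arg z))) C1_differentiable_on S" "(\<lambda>t. rot (t * \<theta>)) C1_differentiable_on S"
    using C1_differentiable_on_cis_affine[of 0 "Arg z" S] C1_differentiable_on_cis_affine[of 0 "- Arg z" S]
      C1_differentiable_on_rot[of 0 \<theta> S]
    by simp_all
  ultimately have "P C1_differentiable_on S"
    by (simp only:) (intro C1_differentiable_on_matrix_mul C1_differentiable_on_diag3 C1_differentiable_on_emb
        C1_differentiable_on_mult C1_differentiable_on_const \<gamma>1(1) \<gamma>2(1))
  moreover have "P t \<in> SU" for t
    unfolding P_def
    by (intro SU_circ_act_E_p SU_Gact SU_rot) (simp_all add: S1_def \<gamma>1(2) \<gamma>2(2) SU_adj)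
  moreover have "P 0 = mat 1" "P 1 = U"
    using \<gamma>1(3,4) \<gamma>2(3,4) by (simp_all add: P_def rot_0 Gact_def U g12(1) flip: zc)
  ultimately show thesis
    using that by blast
qed

lemma SU_C1_path:
  fixes A B :: "complex^3^3"
  assumes A: "A \<in> SU" and B: "B \<in> SU"
  shows "\<exists>\<gamma>. \<gamma> C1_differentiable_on {0..1} \<and> (\<forall>s\<in>{0..1}. \<gamma> s \<in> SU) \<and> \<gamma> 0 = A \<and> \<gamma> 1 = B"
proof -
  obtain P where P: "P C1_differentiable_on {0..1}" "\<And>t. P t \<in> SU" "P 0 = mat 1" "P 1 = adj A ** B"
    using SU_C1_path_from_1[OF SU_matrix_mul[OF SU_adj[OF A] B], where S = "{0..1}"] by blast
  have "(\<lambda>t. A ** P t) C1_differentiable_on {0..1}"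
    by (intro C1_differentiable_on_matrix_mul P(1) C1_differentiable_on_const)
  moreover have "A ** P 1 = B"
    using P(4) SU_unitary[OF A] by (simp add: matrix_mul_assoc)
  ultimately show ?thesis
    using SU_matrix_mul[OF A P(2)] P(3) by (intro exI[of _ "\<lambda>t. A ** P t"]) simp
qed

section \<open>Lengths of curves\<close>

lemma esch_sqnorm_expand: "esch_sqnorm t Y =
   t * cmod (Y$1$1)^2 + t * cmod (Y$1$2)^2 + cmod (Y$1$3)^2 +
   t * cmod (Y$2$1)^2 + t * cmod (Y$2$2)^2 + cmod (Y$2$3)^2 +
   cmod (Y$3$1)^2 + cmod (Y$3$2)^2 + t * cmod (Y$3$3)^2"
  unfolding esch_sqnorm_def by (simp add: sum_3)

lemma esch_sqnorm_nonneg: "0 \<le> t \<Longrightarrow> 0 \<le> esch_sqnorm t Y"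
  unfolding esch_sqnorm_def by (intro sum_nonneg) auto

lemma cauchy_schwarz_2: "(a * b + c * d) ^ 2 \<le> (a ^ 2 + c ^ 2) * (b ^ 2 + d ^ 2)" for a b c d :: real
proof -
  have "0 \<le> (a * d - c * b) ^ 2"
    by simp
  then show ?thesis
    by (simp add: power2_eq_square algebra_simps)
qed

lemma SU_curve_left_log_derivative_skew:
  fixes g :: "real \<Rightarrow> complex^'n^'n"
  assumes SU: "\<forall>s\<in>S. g s \<in> SU" and "open S" "x \<in> S" and D: "(g has_vector_derivative D) (at x)"
  shows "adj (adj (g x) ** D) + adj (g x) ** D = 0"
proof -
  have "((\<lambda>y. adj (g y) ** g y) has_vector_derivative (adj D ** g x + adj (g x) ** D)) (at x)"
    by (rule has_vector_derivative_matrix_mul[OF has_vector_derivative_adj[OF D] D])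
  moreover have "((\<lambda>y. adj (g y) ** g y) has_vector_derivative 0) (at x)"
    by (rule has_vector_derivative_transform_within_open[of "\<lambda>y. mat 1" _ _ S])
      (use SU assms(2,3) in \<open>auto simp: SU_unitary'\<close>)
  ultimately have "adj D ** g x + adj (g x) ** D = 0"
    by (rule vector_derivative_unique_at)
  then show ?thesis
    by (simp add: adj_matrix_mul)
qed

text \<open>Since \<open>Y\<^sub>3\<^sub>3\<close> is imaginary, only the entries \<open>Y\<^sub>1\<^sub>3, Y\<^sub>2\<^sub>3\<close> of the
  complement of u(2) enter the derivative of \<open>\<bar>U\<^sub>3\<^sub>3\<bar>\<^sup>2\<close> along \<open>U Y\<close>; they are not
  rescaled by \<open>t\<close>, so the bound is independent of \<open>t\<close>.\<close>
lemma corner_derivative_bound: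
  fixes U Y :: "complex^3^3"
  assumes U: "U \<in> SU" and skew: "adj Y + Y = 0" and t: "0 \<le> t"
  shows "(2 * Re (cnj (U$3$3) * (U ** Y)$3$3)) ^ 2 \<le>
     2 * cmod (U$3$3) ^ 2 * (1 - cmod (U$3$3) ^ 2) * esch_sqnorm t Y"
proof -
  have entries: "(adj Y + Y) $ 3 $ 3 = 0" "(adj Y + Y) $ 1 $ 3 = 0" "(adj Y + Y) $ 2 $ 3 = 0"
    using skew by simp_all
  have Y33: "Re (Y$3$3) = 0"
    using entries(1) by (simp add: complex_eq_iff)
  have Y31: "cmod (Y$3$1) = cmod (Y$1$3)" and Y32: "cmod (Y$3$2) = cmod (Y$2$3)"
    using entries(2,3) by (metis add_eq_0_iff complex_mod_cnj norm_minus_cancel vector_add_component adj_nth)+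
  define q where "q = cmod (U$3$3) ^ 2"
  define S where "S = cmod (Y$1$3) ^ 2 + cmod (Y$2$3) ^ 2"
  have row: "cmod (U$3$1) ^ 2 + cmod (U$3$2) ^ 2 = 1 - q"
    using SU3_last_row_norm[OF U] q_def by simp
  have E: "2 * S \<le> esch_sqnorm t Y"
    unfolding esch_sqnorm_expand S_def using Y31 Y32 t by simp
  have "Re (cnj (U$3$3) * (U ** Y)$3$3) =
      Re (cnj (U$3$3) * (U$3$1 * Y$1$3 + U$3$2 * Y$2$3)) + cmod (U$3$3) ^ 2 * Re (Y$3$3)"
    unfolding matrix_mul_nth_3 using cmod_power2[of "U$3$3"] by (simp add: algebra_simps power2_eq_square)
  then have "\<bar>Re (cnj (U$3$3) * (U ** Y)$3$3)\<bar> = \<bar>Re (cnj (U$3$3) * (U$3$1 * Y$1$3 + U$3$2 * Y$2$3))\<bar>"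
    using Y33 by simp
  also have "\<dots> \<le> cmod (cnj (U$3$3) * (U$3$1 * Y$1$3 + U$3$2 * Y$2$3))"
    by (rule abs_Re_le_cmod)
  also have "\<dots> \<le> cmod (U$3$3) * (cmod (U$3$1) * cmod (Y$1$3) + cmod (U$3$2) * cmod (Y$2$3))"
    by (simp add: norm_mult mult_left_mono norm_triangle_le)
  finally have bound: "\<bar>Re (cnj (U$3$3) * (U ** Y)$3$3)\<bar> \<le>
      cmod (U$3$3) * (cmod (U$3$1) * cmod (Y$1$3) + cmod (U$3$2) * cmod (Y$2$3))" .
  have "(2 * Re (cnj (U$3$3) * (U ** Y)$3$3)) ^ 2 = 4 * \<bar>Re (cnj (U$3$3) * (U ** Y)$3$3)\<bar> ^ 2"
    by (simp only: power2_abs power_mult_distrib) simp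
  also have "\<dots> \<le> 4 * (cmod (U$3$3) * (cmod (U$3$1) * cmod (Y$1$3) + cmod (U$3$2) * cmod (Y$2$3))) ^ 2"
    using bound by (intro mult_left_mono power_mono) auto
  also have "\<dots> = 4 * q * (cmod (U$3$1) * cmod (Y$1$3) + cmod (U$3$2) * cmod (Y$2$3)) ^ 2"
    by (simp add: q_def power_mult_distrib)
  also have "\<dots> \<le> 4 * q * ((1 - q) * S)"
    using cauchy_schwarz_2[of "cmod (U$3$1)" "cmod (Y$1$3)" "cmod (U$3$2)" "cmod (Y$2$3)"] row
    unfolding S_def q_def by (intro mult_left_mono) auto
  also have "\<dots> \<le> 2 * q * (1 - q) * esch_sqnorm t Y"
  proof -
    have "0 \<le> q * (1 - q)"
      using row q_def by (metis add_nonneg_nonneg mult_nonneg_nonneg zero_le_power2)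
    then show ?thesis
      using mult_left_mono[OF E, of "q * (1 - q)"] by (simp add: algebra_simps)
  qed
  finally show ?thesis
    unfolding q_def .
qed

lemma has_real_derivative_cmod_power2:
  assumes "(f has_vector_derivative f') (at x)"
  shows "((\<lambda>y. cmod (f y) ^ 2) has_real_derivative 2 * Re (cnj (f x) * f')) (at x)"
proof -
  have re: "((\<lambda>y. Re (f y)) has_real_derivative Re f') (at x)"
    and im: "((\<lambda>y. Im (f y)) has_real_derivative Im f') (at x)"
    using bounded_linear.has_vector_derivative[OF bounded_linear_Re assms]
      bounded_linear.has_vector_derivative[OF bounded_linear_Im assms]
    by (simp_all add: has_real_derivative_iff_has_vector_derivative)
  have "(\<lambda>y. cmod (f y) ^ 2) = (\<lambda>y. Re (f y) * Re (f y) + Im (f y) * Im (f y))"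
    by (rule ext, subst cmod_power2, simp add: power2_eq_square)
  then show ?thesis
    by (simp only:) (rule DERIV_cong[OF DERIV_add[OF DERIV_mult[OF re re] DERIV_mult[OF im im]]],
        simp add: algebra_simps)
qed

lemma abs_diff_le_integral_of_deriv_bound:
  fixes G v :: "real \<Rightarrow> real"
  assumes "a \<le> b" and G: "continuous_on {a..b} G"
    and G': "\<And>x. x \<in> {a<..<b} \<Longrightarrow> \<exists>G'. (G has_real_derivative G') (at x) \<and> \<bar>G'\<bar> \<le> v x"
    and v: "v integrable_on {a..b}" "\<And>x. x \<in> {a..b} \<Longrightarrow> 0 \<le> v x"
  shows "\<bar>G b - G a\<bar> \<le> integral {a..b} v"
proof -
  define G'' where
    "G'' x = (if x \<in> {a<..<b} then SOME G'. (G has_real_derivative G') (at x) \<and> \<bar>G'\<bar> \<le> v x else 0)" for x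
  have G'': "(G has_real_derivative G'' x) (at x) \<and> \<bar>G'' x\<bar> \<le> v x" if "x \<in> {a<..<b}" for x
    using someI_ex[OF G'[OF that]] that by (simp add: G''_def)
  have int: "(G'' has_integral G b - G a) {a..b}"
    by (rule fundamental_theorem_of_calculus_interior[OF \<open>a \<le> b\<close> G])
      (simp add: G'' flip: has_real_derivative_iff_has_vector_derivative)
  have vi: "(v has_integral integral {a..b} v) {a..b}"
    using v(1) by (rule integrable_integral)
  have le: "\<bar>G'' x\<bar> \<le> v x" if "x \<in> {a..b}" for x
    using G'' v(2)[OF that] by (cases "x \<in> {a<..<b}") (simp_all add: G''_def)
  have "G b - G a \<le> integral {a..b} v"
    using int vi by (rule has_integral_le) (use le in force)
  moreover have "- (G b - G a) \<le> integral {a..b} v"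
    using has_integral_neg[OF int] vi by (rule has_integral_le) (use le in force)
  ultimately show ?thesis
    by linarith
qed

lemma has_real_derivative_arccos_sqrt:
  assumes "0 < w" "w < 1"
  shows "((\<lambda>y. arccos (sqrt y)) has_real_derivative - 1 / (2 * sqrt (w * (1 - w)))) (at w)"
proof -
  have "-1 < sqrt w" "sqrt w < 1"
    using assms by (auto intro: order_less_trans[of _ 0])
  then have "((\<lambda>y. arccos (sqrt y)) has_real_derivative
      inverse (- sqrt (1 - (sqrt w)\<^sup>2)) * (inverse (sqrt w) / 2)) (at w)"
    using assms by (intro DERIV_chain2[OF DERIV_arccos DERIV_real_sqrt]) auto
  moreover have "inverse (- sqrt (1 - (sqrt w)\<^sup>2)) * (inverse (sqrt w) / 2) = - 1 / (2 * sqrt (w * (1 - w)))"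
    unfolding real_sqrt_mult using assms by (simp add: field_simps)
  ultimately show ?thesis
    by (simp add: mult.commute)
qed

text \<open>\<open>arccos \<circ> sqrt\<close> is not differentiable at \<open>0\<close> and \<open>1\<close>, which \<open>\<bar>g\<^sub>3\<^sub>3\<bar>\<^sup>2\<close> may reach
  along a curve \<open>g\<close>; the affine change \<open>y \<mapsto> (y + e) / (1 + 2 e)\<close> maps \<open>[0, 1]\<close> into
  \<open>(0, 1)\<close>, and the bound obtained for it passes to the limit \<open>e \<rightarrow> 0\<close>.\<close>
definition arccos_sqrt_reg :: "real \<Rightarrow> real \<Rightarrow> real" where
  "arccos_sqrt_reg e y = arccos (sqrt ((y + e) / (1 + 2 * e)))"

lemma tendsto_arccos_sqrt_reg:
  assumes "0 \<le> y" "y \<le> 1"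
  shows "((\<lambda>e. arccos_sqrt_reg e y) \<longlongrightarrow> arccos (sqrt y)) (at_right 0)"
proof -
  have "((\<lambda>e::real. sqrt ((y + e) / (1 + 2 * e))) \<longlongrightarrow> sqrt ((y + 0) / (1 + 2 * 0))) (at_right 0)"
    by (intro tendsto_intros) auto
  then have lim: "((\<lambda>e::real. sqrt ((y + e) / (1 + 2 * e))) \<longlongrightarrow> sqrt y) (at_right 0)"
    by simp
  have ev: "\<forall>\<^sub>F e in at_right 0. sqrt ((y + e) / (1 + 2 * e)) \<in> {-1..1}"
    using eventually_at_right_less[of 0]
  proof (rule eventually_mono)
    fix e :: real assume "0 < e"
    then have "0 \<le> (y + e) / (1 + 2 * e)" "(y + e) / (1 + 2 * e) \<le> 1"
      using assms by (auto simp: field_simps)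
    then show "sqrt ((y + e) / (1 + 2 * e)) \<in> {-1..1}"
      by (auto intro: order_trans[of _ 0])
  qed
  have "sqrt y \<in> {-1..1}"
    using assms by (auto intro: order_trans[of _ 0])
  then show ?thesis
    unfolding arccos_sqrt_reg_def by (rule continuous_on_tendsto_compose[OF continuous_on_arccos' lim _ ev])
qed

lemma arccos_sqrt_reg_deriv_bound:
  fixes q q' v e :: real
  assumes q: "0 \<le> q" "q \<le> 1" and e: "0 < e"
    and q': "q' ^ 2 \<le> 2 * q * (1 - q) * v ^ 2" and v: "0 \<le> v"
  defines "u \<equiv> (q + e) / (1 + 2 * e)"
  shows "\<bar>sqrt 2 * (- 1 / (2 * sqrt (u * (1 - u))) * (q' / (1 + 2 * e)))\<bar> \<le> v"
proof -
  define a where "a = u * (1 - u)"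
  have ne: "1 + 2 * e \<noteq> 0"
    using e by simp
  have "0 < u" "u < 1"
    using q e by (auto simp: u_def field_simps)
  then have a: "0 < a"
    by (simp add: a_def)
  have "1 - u = (1 + e - q) / (1 + 2 * e)"
    unfolding u_def using ne by (simp add: field_simps)
  then have aq: "a * (1 + 2 * e) ^ 2 = (q + e) * (1 + e - q)"
    unfolding a_def by (simp add: u_def ne power2_eq_square)
  have "(sqrt 2 * \<bar>q'\<bar>) ^ 2 = 2 * q' ^ 2"
    by (simp add: power_mult_distrib)
  also have "\<dots> \<le> 4 * (q * (1 - q)) * v ^ 2"
    using q' by simp
  also have "\<dots> \<le> 4 * ((q + e) * (1 + e - q)) * v ^ 2"
    using q e by (intro mult_right_mono mult_left_mono) (auto simp: algebra_simps)
  also have "\<dots> = (v * (2 * sqrt a * (1 + 2 * e))) ^ 2"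
    using a by (simp add: power_mult_distrib flip: aq)
  finally have "sqrt 2 * \<bar>q'\<bar> \<le> v * (2 * sqrt a * (1 + 2 * e))"
    by (rule power2_le_imp_le) (use v e a in simp)
  moreover have "\<bar>sqrt 2 * (- 1 / (2 * sqrt a) * (q' / (1 + 2 * e)))\<bar> = sqrt 2 * \<bar>q'\<bar> / (2 * sqrt a * (1 + 2 * e))"
    using e a by (simp add: abs_mult field_simps)
  ultimately show ?thesis
    using a e by (simp add: a_def[symmetric] pos_divide_le_eq)
qed

lemma continuous_on_arccos_sqrt_reg:
  assumes "continuous_on S q" "\<And>x. x \<in> S \<Longrightarrow> 0 \<le> q x \<and> q x \<le> 1" "0 < e"
  shows "continuous_on S (\<lambda>x. arccos_sqrt_reg e (q x))"
  unfolding arccos_sqrt_reg_def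
proof (rule continuous_on_arccos)
  show "continuous_on S (\<lambda>x. sqrt ((q x + e) / (1 + 2 * e)))"
    using assms by (intro continuous_intros) auto
  show "\<forall>x\<in>S. -1 \<le> sqrt ((q x + e) / (1 + 2 * e)) \<and> sqrt ((q x + e) / (1 + 2 * e)) \<le> 1"
  proof
    fix x assume "x \<in> S"
    then have "0 \<le> (q x + e) / (1 + 2 * e)" "(q x + e) / (1 + 2 * e) \<le> 1"
      using assms(2)[of x] assms(3) by (auto simp: field_simps)
    then show "-1 \<le> sqrt ((q x + e) / (1 + 2 * e)) \<and> sqrt ((q x + e) / (1 + 2 * e)) \<le> 1"
      by (auto intro: order_trans[of _ 0])
  qed
qed

lemma has_real_derivative_arccos_sqrt_reg_bounded:
  assumes q: "(q has_real_derivative q') (at x)" "0 \<le> q x" "q x \<le> 1" and e: "0 < e"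
    and q': "q' ^ 2 \<le> 2 * q x * (1 - q x) * v ^ 2" and v: "0 \<le> v"
  shows "\<exists>G'. ((\<lambda>y. sqrt 2 * arccos_sqrt_reg e (q y)) has_real_derivative G') (at x) \<and> \<bar>G'\<bar> \<le> v"
proof (intro exI conjI)
  define u where "u = (q x + e) / (1 + 2 * e)"
  have "0 < u" "u < 1"
    using q e by (auto simp: u_def field_simps)
  moreover have "((\<lambda>y. (q y + e) / (1 + 2 * e)) has_real_derivative q' / (1 + 2 * e)) (at x)"
    using q(1) e by (auto intro!: derivative_eq_intros)
  ultimately have "((\<lambda>y. arccos (sqrt ((q y + e) / (1 + 2 * e)))) has_real_derivative
      - 1 / (2 * sqrt (u * (1 - u))) * (q' / (1 + 2 * e))) (at x)"
    unfolding u_def by (rule DERIV_chain2[OF has_real_derivative_arccos_sqrt])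
  then show "((\<lambda>y. sqrt 2 * arccos_sqrt_reg e (q y)) has_real_derivative
      sqrt 2 * (- 1 / (2 * sqrt (u * (1 - u))) * (q' / (1 + 2 * e)))) (at x)"
    unfolding arccos_sqrt_reg_def by (rule DERIV_cmult)
  show "\<bar>sqrt 2 * (- 1 / (2 * sqrt (u * (1 - u))) * (q' / (1 + 2 * e)))\<bar> \<le> v"
    unfolding u_def using q(2,3) e q' v by (rule arccos_sqrt_reg_deriv_bound)
qed

lemma SU_curve_corner_derivative_bound:
  fixes g :: "real \<Rightarrow> complex^3^3"
  assumes SU: "\<forall>s\<in>S. g s \<in> SU" and S: "open S" "x \<in> S"
    and D: "(g has_vector_derivative D) (at x)" and t: "0 \<le> t"
  shows "(2 * Re (cnj (g x $ 3 $ 3) * D $ 3 $ 3)) ^ 2 \<le>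
     2 * cmod (g x $ 3 $ 3) ^ 2 * (1 - cmod (g x $ 3 $ 3) ^ 2) * esch_sqnorm t (adj (g x) ** D)"
proof -
  have gx: "g x \<in> SU"
    using SU S by auto
  then have "g x ** (adj (g x) ** D) = D"
    using SU_unitary[OF gx] by (simp add: matrix_mul_assoc)
  then show ?thesis
    using corner_derivative_bound[OF gx SU_curve_left_log_derivative_skew[OF SU S D] t] by simp
qed

lemma curve_length_C1:
  assumes "g C1_differentiable_on {0..1}"
  obtains D where "\<forall>x\<in>{0..1}. (g has_vector_derivative D x) (at x)" "continuous_on {0..1} D"
    "curve_length t g = integral {0..1} (\<lambda>x. sqrt (esch_sqnorm t (adj (g x) ** D x)))"
proof -
  obtain D where D: "\<forall>x\<in>{0..1}. (g has_vector_derivative D x) (at x)" "continuous_on {0..1} D"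
    using assms unfolding C1_differentiable_on_def by blast
  have "vector_derivative g (at x within {0..1}) = D x" if "x \<in> {0..1}" for x
    by (rule vector_derivative_within_closed_interval)
      (use D(1) that in \<open>auto intro: has_vector_derivative_at_within\<close>)
  then have "curve_length t g = integral {0..1} (\<lambda>x. sqrt (esch_sqnorm t (adj (g x) ** D x)))"
    unfolding curve_length_def by (intro integral_cong) simp
  then show thesis
    using that D by blast
qed

lemma curve_length_ge_arccos_sqrt_reg:
  fixes g :: "real \<Rightarrow> complex^3^3"
  assumes t: "0 < t" and C1: "g C1_differentiable_on {0..1}" and SU: "\<forall>s\<in>{0..1}. g s \<in> SU"
    and e: "0 < e"
  shows "\<bar>sqrt 2 * arccos_sqrt_reg e (cmod (g 1 $ 3 $ 3) ^ 2) -
          sqrt 2 * arccos_sqrt_reg e (cmod (g 0 $ 3 $ 3) ^ 2)\<bar> \<le> curve_length t g"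
proof -
  obtain D where D: "\<forall>x\<in>{0..1}. (g has_vector_derivative D x) (at x)" "continuous_on {0..1} D"
    and len: "curve_length t g = integral {0..1} (\<lambda>x. sqrt (esch_sqnorm t (adj (g x) ** D x)))"
    using curve_length_C1[OF C1] by blast
  define v where "v x = sqrt (esch_sqnorm t (adj (g x) ** D x))" for x
  define q where "q x = cmod (g x $ 3 $ 3) ^ 2" for x
  define q' where "q' x = 2 * Re (cnj (g x $ 3 $ 3) * D x $ 3 $ 3)" for x
  have cont_g: "continuous_on {0..1} g"
    using C1 by (rule C1_differentiable_imp_continuous_on)
  have "continuous_on {0..1} v"
    unfolding v_def esch_sqnorm_expand matrix_mul_nth_3 adj_nth by (intro continuous_intros cont_g D(2))
  then have v_int: "v integrable_on {0..1}"
    by (rule integrable_continuous_interval)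
  have v_nonneg: "0 \<le> v x" for x
    using esch_sqnorm_nonneg t by (simp add: v_def)
  have q01: "0 \<le> q x \<and> q x \<le> 1" if "x \<in> {0..1}" for x
    using SU3_corner_le_1 SU that by (simp add: q_def power_le_one)
  have "\<exists>G'. ((\<lambda>y. sqrt 2 * arccos_sqrt_reg e (q y)) has_real_derivative G') (at x) \<and> \<bar>G'\<bar> \<le> v x"
    if x: "x \<in> {0<..<1}" for x
  proof (rule has_real_derivative_arccos_sqrt_reg_bounded[OF _ _ _ e _ v_nonneg])
    have Dx: "(g has_vector_derivative D x) (at x)"
      using D(1) x by auto
    show "(q has_real_derivative q' x) (at x)"
      unfolding q_def q'_def
      by (rule has_real_derivative_cmod_power2[OF has_vector_derivative_vec_nth[OF has_vector_derivative_vec_nth[OF Dx]]])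
    show "0 \<le> q x" "q x \<le> 1"
      using q01 x by auto
    have "\<forall>s\<in>{0<..<1}. g s \<in> SU"
      using SU by auto
    then show "(q' x) ^ 2 \<le> 2 * q x * (1 - q x) * (v x) ^ 2"
      using SU_curve_corner_derivative_bound[OF _ _ x Dx, of t] t esch_sqnorm_nonneg[of t]
      by (simp add: q_def q'_def v_def)
  qed
  then have "\<bar>sqrt 2 * arccos_sqrt_reg e (q 1) - sqrt 2 * arccos_sqrt_reg e (q 0)\<bar> \<le> integral {0..1} v"
    using q01 e v_int v_nonneg
    by (intro abs_diff_le_integral_of_deriv_bound continuous_on_mult continuous_on_const
        continuous_on_arccos_sqrt_reg) (auto simp: q_def intro!: continuous_intros cont_g)
  then show ?thesis
    by (simp add: len q_def v_def[abs_def])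
qed

lemma curve_length_ge_orbit_coord_diff:
  fixes g :: "real \<Rightarrow> complex^3^3"
  assumes t: "0 < t" and C1: "g C1_differentiable_on {0..1}" and SU: "\<forall>s\<in>{0..1}. g s \<in> SU"
  shows "\<bar>orbit_coord (g 1) - orbit_coord (g 0)\<bar> \<le> curve_length t g"
proof (rule tendsto_upperbound)
  have "((\<lambda>e. arccos_sqrt_reg e (cmod (g x $ 3 $ 3) ^ 2)) \<longlongrightarrow> arccos (cmod (g x $ 3 $ 3))) (at_right 0)"
    if "x \<in> {0..1}" for x
    using tendsto_arccos_sqrt_reg[of "cmod (g x $ 3 $ 3) ^ 2"] SU3_corner_le_1 SU that
    by (simp add: power_le_one)
  then show "((\<lambda>e. \<bar>sqrt 2 * arccos_sqrt_reg e (cmod (g 1 $ 3 $ 3) ^ 2) -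
          sqrt 2 * arccos_sqrt_reg e (cmod (g 0 $ 3 $ 3) ^ 2)\<bar>) \<longlongrightarrow>
      \<bar>orbit_coord (g 1) - orbit_coord (g 0)\<bar>) (at_right 0)"
    unfolding orbit_coord_def
    by (intro tendsto_intros) simp_all
  show "\<forall>\<^sub>F e in at_right 0. \<bar>sqrt 2 * arccos_sqrt_reg e (cmod (g 1 $ 3 $ 3) ^ 2) -
          sqrt 2 * arccos_sqrt_reg e (cmod (g 0 $ 3 $ 3) ^ 2)\<bar> \<le> curve_length t g"
    using eventually_at_right_less[of 0]
    by (rule eventually_mono) (rule curve_length_ge_arccos_sqrt_reg[OF t C1 SU])
qed simp

section \<open>Distances in \<open>E\<^sub>p\<close>\<close>

lemma curve_length_nonneg: "0 \<le> t \<Longrightarrow> 0 \<le> curve_length t g"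
  unfolding curve_length_def
  by (cases "(\<lambda>s. sqrt (esch_sqnorm t (adj (g s) ** vector_derivative g (at s within {0..1})))) integrable_on {0..1}")
    (auto intro!: integral_nonneg simp: esch_sqnorm_nonneg not_integrable_integral)

definition rot_gen :: "real \<Rightarrow> complex^3^3" where
  "rot_gen d = (\<chi> i j. if i = 3 \<and> j = 2 then of_real d else if i = 2 \<and> j = 3 then - of_real d else 0)"

lemma has_vector_derivative_rot:
  "((\<lambda>x. rot (a + x * d)) has_vector_derivative rot (a + x * d) ** rot_gen d) (at x within S)"
proof (intro has_vector_derivative_componentwise)
  fix i j :: 3
  have "((\<lambda>x. complex_of_real (cos (a + x * d))) has_vector_derivative
      complex_of_real (- sin (a + x * d) * d)) (at x within S)"
    "((\<lambda>x. complex_of_real (sin (a + x * d))) has_vector_derivative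
      complex_of_real (cos (a + x * d) * d)) (at x within S)"
    by (auto intro!: has_vector_derivative_of_real derivative_eq_intros)
  then show "((\<lambda>x. rot (a + x * d) $ i $ j) has_vector_derivative (rot (a + x * d) ** rot_gen d) $ i $ j) (at x within S)"
    using exhaust_3[of i] exhaust_3[of j]
    by (auto simp: matrix_mul_nth_3 rot_gen_def intro: has_vector_derivative_minus[THEN has_vector_derivative_eq_rhs])
qed

lemma curve_length_rot: "curve_length t (\<lambda>x. rot (a + x * d)) = sqrt 2 * \<bar>d\<bar>"
proof -
  have "vector_derivative (\<lambda>x. rot (a + x * d)) (at x within {0..1}) = rot (a + x * d) ** rot_gen d"
    if "x \<in> {0..1}" for x
    using that by (intro vector_derivative_within_closed_interval has_vector_derivative_rot) auto
  moreover have "adj (rot \<theta>) ** (rot \<theta> ** rot_gen d) = rot_gen d" for \<theta>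
    using SU_unitary'[OF SU_rot] by (simp add: matrix_mul_assoc)
  moreover have "esch_sqnorm t (rot_gen d) = 2 * d ^ 2"
    by (simp add: esch_sqnorm_expand rot_gen_def)
  ultimately have "curve_length t (\<lambda>x. rot (a + x * d)) = integral {0..1} (\<lambda>x::real. sqrt 2 * \<bar>d\<bar>)"
    unfolding curve_length_def by (intro integral_cong) (simp add: real_sqrt_mult)
  then show ?thesis
    by simp
qed

lemma su3_dist_rot_le:
  assumes "0 \<le> t" shows "su3_dist t (rot a) (rot b) \<le> sqrt 2 * \<bar>b - a\<bar>"
  unfolding su3_dist_def
proof (rule cInf_lower)
  have "(\<lambda>x. rot (a + x * (b - a))) C1_differentiable_on {0..1}"
    by (rule C1_differentiable_on_rot)
  then show "sqrt 2 * \<bar>b - a\<bar> \<in> {curve_length t \<gamma> |\<gamma>. \<gamma> C1_differentiable_on {0..1} \<and>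
      (\<forall>s\<in>{0..1}. \<gamma> s \<in> SU) \<and> \<gamma> 0 = rot a \<and> \<gamma> 1 = rot b}"
    using SU_rot curve_length_rot[of t a "b - a"] by (auto intro!: exI[of _ "\<lambda>x. rot (a + x * (b - a))"])
  show "bdd_below {curve_length t \<gamma> |\<gamma>. \<gamma> C1_differentiable_on {0..1} \<and>
      (\<forall>s\<in>{0..1}. \<gamma> s \<in> SU) \<and> \<gamma> 0 = rot a \<and> \<gamma> 1 = rot b}"
    using curve_length_nonneg[OF assms] by (intro bdd_belowI[of _ 0]) auto
qed

lemma su3_dist_ge_orbit_coord_diff:
  assumes "0 < t" "A \<in> SU" "B \<in> SU"
  shows "\<bar>orbit_coord B - orbit_coord A\<bar> \<le> su3_dist t A B"
  unfolding su3_dist_def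
proof (rule cInf_greatest)
  show "{curve_length t \<gamma> |\<gamma>. \<gamma> C1_differentiable_on {0..1} \<and> (\<forall>s\<in>{0..1}. \<gamma> s \<in> SU) \<and>
      \<gamma> 0 = A \<and> \<gamma> 1 = B} \<noteq> {}"
    using SU_C1_path[OF assms(2,3)] by auto
  show "\<bar>orbit_coord B - orbit_coord A\<bar> \<le> l"
    if "l \<in> {curve_length t \<gamma> |\<gamma>. \<gamma> C1_differentiable_on {0..1} \<and> (\<forall>s\<in>{0..1}. \<gamma> s \<in> SU) \<and>
      \<gamma> 0 = A \<and> \<gamma> 1 = B}" for l
    using that curve_length_ge_orbit_coord_diff[OF assms(1)] by auto
qed

lemma esch_dist_ge_orbit_coord_diff:
  assumes "0 < t" "A \<in> SU" "B \<in> SU"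
  shows "\<bar>orbit_coord B - orbit_coord A\<bar> \<le> esch_dist (a_p p) (b_p p) t A B"
  unfolding esch_dist_def
proof (rule cInf_greatest)
  show "{su3_dist t A (circ_act (a_p p) (b_p p) z B) |z. z \<in> S1} \<noteq> {}"
    using S1_1 by blast
  show "\<bar>orbit_coord B - orbit_coord A\<bar> \<le> l" if "l \<in> {su3_dist t A (circ_act (a_p p) (b_p p) z B) |z. z \<in> S1}" for l
    using that su3_dist_ge_orbit_coord_diff[OF assms(1,2) SU_circ_act_E_p[OF _ assms(3)]] by auto
qed

lemma esch_dist_le_su3_dist:
  assumes "0 < t" "A \<in> SU" "B \<in> SU"
  shows "esch_dist (a_p p) (b_p p) t A B \<le> su3_dist t A B"
  unfolding esch_dist_def
proof (rule cInf_lower)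
  show "su3_dist t A B \<in> {su3_dist t A (circ_act (a_p p) (b_p p) z B) |z. z \<in> S1}"
    using S1_1 circ_act_E_p_1 by (metis (mono_tags, lifting) mem_Collect_eq)
  show "bdd_below {su3_dist t A (circ_act (a_p p) (b_p p) z B) |z. z \<in> S1}"
    using order_trans[OF abs_ge_zero su3_dist_ge_orbit_coord_diff[OF assms(1,2) SU_circ_act_E_p[OF _ assms(3)]]]
    by (intro bdd_belowI[of _ 0]) auto
qed

lemma esch_dist_rot:
  assumes "0 < t" "a \<in> {0..pi/2}" "b \<in> {0..pi/2}"
  shows "esch_dist (a_p p) (b_p p) t (rot a) (rot b) = sqrt 2 * \<bar>a - b\<bar>"
proof (rule antisym)
  show "esch_dist (a_p p) (b_p p) t (rot a) (rot b) \<le> sqrt 2 * \<bar>a - b\<bar>"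
    using esch_dist_le_su3_dist[OF assms(1) SU_rot SU_rot, of p a b] su3_dist_rot_le[of t a b]
      assms(1) abs_minus_commute[of a b] by force
  show "sqrt 2 * \<bar>a - b\<bar> \<le> esch_dist (a_p p) (b_p p) t (rot a) (rot b)"
  proof -
    have "\<bar>orbit_coord (rot b) - orbit_coord (rot a)\<bar> = sqrt 2 * \<bar>a - b\<bar>"
      using assms(2,3) by (simp add: orbit_coord_rot abs_mult abs_minus_commute flip: right_diff_distrib)
    then show ?thesis
      using esch_dist_ge_orbit_coord_diff[OF assms(1) SU_rot SU_rot, of b a p] by simp
  qed
qed

section \<open>A minimal geodesic between the singular orbits\<close>

definition geod_len :: real where
  "geod_len = sqrt 2 * (pi / 2)"

definition geod :: "real \<Rightarrow> complex^3^3" where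
  "geod s = rot (s / sqrt 2)"

lemma geod_len_pos: "0 < geod_len"
  by (simp add: geod_len_def)

lemma SU_geod: "geod s \<in> SU"
  by (simp add: geod_def SU_rot)

lemma geod_0: "geod 0 = mat 1"
  by (simp add: geod_def rot_0)

lemma geod_geod_len: "geod geod_len = rot (pi / 2)"
  by (simp add: geod_def geod_len_def)

lemma geod_angle_le_iff: "s / sqrt 2 \<le> pi / 2 \<longleftrightarrow> s \<le> geod_len"
  and geod_angle_less_iff: "s / sqrt 2 < pi / 2 \<longleftrightarrow> s < geod_len"
  by (simp_all add: geod_len_def pos_divide_le_eq pos_divide_less_eq ac_simps)

lemma geod_angle: "s \<in> {0..geod_len} \<Longrightarrow> s / sqrt 2 \<in> {0..pi/2}"
  using geod_angle_le_iff[of s] by (simp only: atLeastAtMost_iff) simp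

lemma orbit_coord_geod: "s \<in> {0..geod_len} \<Longrightarrow> orbit_coord (geod s) = s"
  using geod_angle[of s] by (simp add: geod_def orbit_coord_rot)

lemma same_Gorbit_geod: "A \<in> SU \<Longrightarrow> \<exists>s\<in>{0..geod_len}. same_Gorbit (a_p p) (b_p p) (geod s) A"
proof -
  assume "A \<in> SU"
  then obtain \<theta> where "\<theta> \<in> {0..pi/2}" "same_Gorbit (a_p p) (b_p p) (rot \<theta>) A"
    using same_Gorbit_rot by blast
  then show ?thesis
    using geod_angle_le_iff[of "sqrt 2 * \<theta>"] by (intro bexI[of _ "sqrt 2 * \<theta>"]) (simp_all add: geod_def)
qed

lemma same_Gorbit_geod_eq:
  "s \<in> {0..geod_len} \<Longrightarrow> s' \<in> {0..geod_len} \<Longrightarrow>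
    same_Gorbit (a_p p) (b_p p) (geod s) (geod s') \<Longrightarrow> s = s'"
  using orbit_coord_geod orbit_coord_same_Gorbit by metis

lemma esch_dist_geod:
  assumes "0 < t" "s \<in> {0..geod_len}" "s' \<in> {0..geod_len}"
  shows "esch_dist (a_p p) (b_p p) t (geod s) (geod s') = \<bar>s - s'\<bar>"
  using esch_dist_rot[OF assms(1) geod_angle[OF assms(2)] geod_angle[OF assms(3)]]
  by (simp add: geod_def abs_divide flip: diff_divide_distrib)

lemma esch_dist_Gact_geod_ends:
  assumes "0 < t" "g \<in> SU \<times> SU" "g' \<in> SU \<times> SU"
  shows "geod_len \<le> esch_dist (a_p p) (b_p p) t (Gact g (geod 0)) (Gact g' (geod geod_len))"
  using esch_dist_ge_orbit_coord_diff[OF assms(1) SU_Gact[OF assms(2) SU_geod[of 0]]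
      SU_Gact[OF assms(3) SU_geod[of geod_len]], of p]
    orbit_coord_geod[of 0] orbit_coord_geod[of geod_len] geod_len_pos
  by simp

lemma isotropy_geod: "s \<in> {0<..<geod_len} \<Longrightarrow> isotropy (a_p p) (b_p p) (geod s) = H_p p"
  using geod_angle_less_iff[of s] unfolding geod_def by (auto intro!: isotropy_E_p_rot)

theorem proposition2p1:
  fixes p :: nat and t :: real
  assumes "p > 0" and "0 < t" and "t < 1"
  shows "\<exists>(c :: real \<Rightarrow> complex^3^3) L. L > 0 \<and>
     (\<forall>s\<in>{0..L}. c s \<in> SU) \<and>
     (\<forall>A\<in>SU. \<exists>s\<in>{0..L}. same_Gorbit (a_p p) (b_p p) (c s) A) \<and>
     (\<forall>s\<in>{0..L}. \<forall>s'\<in>{0..L}. same_Gorbit (a_p p) (b_p p) (c s) (c s') \<longrightarrow> s = s') \<and>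
     (\<forall>s\<in>{0..L}. \<forall>s'\<in>{0..L}. esch_dist (a_p p) (b_p p) t (c s) (c s') = \<bar>s - s'\<bar>) \<and>
     (\<forall>g\<in>SU \<times> SU. \<forall>g'\<in>SU \<times> SU.
        L \<le> esch_dist (a_p p) (b_p p) t (Gact g (c 0)) (Gact g' (c L))) \<and>
     isotropy (a_p p) (b_p p) (c 0) = Kminus_p p \<and>
     isotropy (a_p p) (b_p p) (c L) = Kplus_p p \<and>
     (\<forall>s\<in>{0<..<L}. isotropy (a_p p) (b_p p) (c s) = H_p p)"
proof -
  \<comment> \<open>The argument works for every \<open>p\<close> and every \<open>t > 0\<close>.\<close>
  have "isotropy (a_p p) (b_p p) (geod 0) = Kminus_p p"
    "isotropy (a_p p) (b_p p) (geod geod_len) = Kplus_p p"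
    by (simp_all add: geod_0 geod_geod_len isotropy_E_p_mat_1 isotropy_E_p_rot_pi_half)
  then show ?thesis
    using assms(2) geod_len_pos SU_geod same_Gorbit_geod same_Gorbit_geod_eq esch_dist_geod
      esch_dist_Gact_geod_ends isotropy_geod
    by (intro exI[of _ geod] exI[of _ geod_len]) blast
qed

end
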